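(* The following hold as $n\to\infty$: (i) $C_3(n,\mathrm{SP}_3)=\Omega\!\left(\left(\frac{\log n}{\log\log n}\right)^{1/8}\right)$; (ii) $C_3(n,\mathrm{SP}^1_4)=\Omega(n^{1/8})$ and $C_3(n,\mathrm{SP}^2_4)=\Omega(n^{1/7})$; (iii) for every $t\ge 5$, $C_3(n,\mathrm{SP}^1_t)=\Omega(n^{1/3})$ and $C_3(n,\mathrm{SP}^2_t)=\Omega(n^{1/3})$.
   Context: An $r$-graph is an $r$-uniform hypergraph; $K_n^{(r)}$ is the complete $r$-graph on $n$ vertices. A copy of an $r$-graph $H$ in $K_n^{(r)}$ is a subhypergraph isomorphic to $H$. An $(n,r,H)$-local coloring with $k$ colors is a family of edge-colorings $f_v:E(K_n^{(r)})\to[k]$, one per vertex $v$, such that for every copy $T$ of $H$ there is $u\in V(T)$ with $f_u$ injective on $E(T)$. $C_r(n,H)$ is the minimum such $k$. $\mathrm{SP}_3$: vertex set $\{a,b,c,d,e,f\}$, edges $\{a,b,c\},\{b,c,d\},\{d,e,f\}$. For $t\ge 1$, $\mathrm{SP}^1_t$ is the $3$-graph with edges $e_j=\{v_{s_j},v_{s_j+1},v_{s_j+2}\}$, $j=1,\dots,t$, where $s_1=1$, $s_{j+1}=s_j+2$ for odd $j$ and $s_{j+1}=s_j+1$ for even $j$ (so its edges are $\{v_1,v_2,v_3\},\{v_3,v_4,v_5\},\{v_4,v_5,v_6\},\{v_6,v_7,v_8\},\dots$ and it has $\lceil (3t+3)/2\rceil$ vertices). $\mathrm{SP}^2_t$ is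 defined the same way but with $s_{j+1}=s_j+1$ for odd $j$ and $s_{j+1}=s_j+2$ for even $j$ (edges $\{v_1,v_2,v_3\},\{v_2,v_3,v_4\},\{v_4,v_5,v_6\},\{v_5,v_6,v_7\},\dots$; it has $\lceil (3t+2)/2\rceil$ vertices). Thus consecutive edges alternately share one and two vertices. *)

theory Defs
  imports Main "HOL-Library.Landau_Symbols"
begin

(* An r-graph is represented by its edge set (a set of vertex sets); its vertex
   set is the union of its edges (all graphs considered have no isolated vertices). *)

definition is_copy :: "nat \<Rightarrow> nat set set \<Rightarrow> nat set set \<Rightarrow> bool" where
  "is_copy n H T \<longleftrightarrow>
     (\<exists>\<phi>::nat \<Rightarrow> nat. inj_on \<phi> (\<Union>H) \<and> \<phi> ` (\<Union>H) \<subseteq> {..<n} \<and> T = (\<lambda>e. \<phi> ` e) ` H)"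

definition local_coloring ::
  "nat \<Rightarrow> nat \<Rightarrow> nat set set \<Rightarrow> nat \<Rightarrow> (nat \<Rightarrow> nat set \<Rightarrow> nat) \<Rightarrow> bool" where
  "local_coloring n r H k f \<longleftrightarrow>
     (\<forall>v<n. \<forall>e. e \<subseteq> {..<n} \<and> card e = r \<longrightarrow> f v e < k) \<and>
     (\<forall>T. is_copy n H T \<longrightarrow> (\<exists>u\<in>\<Union>T. inj_on (f u) T))"

definition C :: "nat \<Rightarrow> nat \<Rightarrow> nat set set \<Rightarrow> nat" where
  "C r n H = (LEAST k. \<exists>f. local_coloring n r H k f)"

definition SP3 :: "nat set set" where
  "SP3 = {{0,1,2},{1,2,3},{3,4,5}}"

(* start index s_{i+1} of edge number i+1 *)
primrec s1 :: "nat \<Rightarrow> nat" where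
  "s1 0 = 1"
| "s1 (Suc i) = s1 i + (if even i then 2 else 1)"

primrec s2 :: "nat \<Rightarrow> nat" where
  "s2 0 = 1"
| "s2 (Suc i) = s2 i + (if even i then 1 else 2)"

definition SP1 :: "nat \<Rightarrow> nat set set" where
  "SP1 t = (\<lambda>i. {s1 i, s1 i + 1, s1 i + 2}) ` {..<t}"

definition SP2 :: "nat \<Rightarrow> nat set set" where
  "SP2 t = (\<lambda>i. {s2 i, s2 i + 1, s2 i + 2}) ` {..<t}"

end

(*
  All bounds follow one scheme: when n is large compared with the number k of colours,
  pigeonhole and averaging arguments locate a copy of H in which every vertex v sees two
  edges of the copy in the same colour f_v, which a local colouring forbids.

  For SP2 4 and SP1 4 one averages monochromatic triples over the n/2 disjoint pairs
  {2i, 2i+1}: this forces n < 20 k^7, resp. n < 30 k^8.  For t >= 5 one first finds x, y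
  such that the edges {0,1,x} and {0,1,y} look alike from 0, 1 and from many other vertices,
  and among these a "fork": two edges {c,r1,r2}, {c,r3,r4} that look alike from x and y;
  this forces n < (4t+12) k^3.  For SP3 a greedy Ramsey-type construction yields
  2k^2+4 vertices v_0, v_1, ... such that the colour at v_p of an edge {v_i, v_j, v_q}
  with p, i, j < q does not depend on q; it exists as soon as n >= 2 (2 k^((2k^2+4)^3))^(2k^2+3),
  whence C_3(n, SP3) is at least of order (log n / log log n)^(1/8).
*)
theory Submission
  imports Defs "HOL-Analysis.Convex" "HOL-Library.FuncSet"
begin

section \<open>Local colourings and copies given by vertex lists\<close>

lemma local_coloring_colour_lt:
  assumes "local_coloring n r H k f" "v < n" "e \<subseteq> {..<n}" "card e = r"
  shows "f v e < k"
  using assms unfolding local_coloring_def by blast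

lemma local_coloring_rainbow_vertex:
  assumes lc: "local_coloring n r H k f"
    and inj: "inj_on \<phi> (\<Union>H)" and rng: "\<phi> ` \<Union>H \<subseteq> {..<n}"
  obtains v where "v \<in> \<Union>H"
    and "\<And>e e'. e \<in> H \<Longrightarrow> e' \<in> H \<Longrightarrow> f (\<phi> v) (\<phi> ` e) = f (\<phi> v) (\<phi> ` e') \<Longrightarrow> e = e'"
proof -
  let ?T = "(\<lambda>e. \<phi> ` e) ` H"
  have "is_copy n H ?T" unfolding is_copy_def using inj rng by blast
  with lc obtain u where u: "u \<in> \<Union>?T" and rainbow: "inj_on (f u) ?T"
    unfolding local_coloring_def by blast
  from u obtain v where v: "v \<in> \<Union>H" and "u = \<phi> v" by auto
  moreover have "e = e'" if "e \<in> H" "e' \<in> H" "f (\<phi> v) (\<phi> ` e) = f (\<phi> v) (\<phi> ` e')" for e e'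
  proof -
    have "\<phi> ` e = \<phi> ` e'" using rainbow that \<open>u = \<phi> v\<close> unfolding inj_on_def by blast
    moreover have "e \<subseteq> \<Union>H" "e' \<subseteq> \<Union>H" using that by auto
    ultimately show "e = e'" using inj by (simp add: inj_on_image_eq_iff)
  qed
  ultimately show thesis using that by blast
qed

lemma local_coloring_list_copy:
  assumes lc: "local_coloring n r H k f"
    and vs: "distinct vs" "set vs \<subseteq> {..<n}" and H: "\<Union>H \<subseteq> {b..<b + length vs}"
  obtains v where "v \<in> \<Union>H"
    and "\<And>e e'. e \<in> H \<Longrightarrow> e' \<in> H \<Longrightarrow>
           f (vs ! (v - b)) ((\<lambda>i. vs ! (i - b)) ` e) = f (vs ! (v - b)) ((\<lambda>i. vs ! (i - b)) ` e')
           \<Longrightarrow> e = e'"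
proof (rule local_coloring_rainbow_vertex[OF lc])
  show "inj_on (\<lambda>i. vs ! (i - b)) (\<Union>H)"
  proof (rule inj_onI)
    fix i j assume "i \<in> \<Union>H" "j \<in> \<Union>H" "vs ! (i - b) = vs ! (j - b)"
    moreover from this H have "i \<in> {b..<b + length vs}" "j \<in> {b..<b + length vs}" by blast+
    ultimately show "i = j" using vs(1) by (auto simp: nth_eq_iff_index_eq)
  qed
  show "(\<lambda>i. vs ! (i - b)) ` \<Union>H \<subseteq> {..<n}"
  proof
    fix x assume "x \<in> (\<lambda>i. vs ! (i - b)) ` \<Union>H"
    then obtain i where "i \<in> {b..<b + length vs}" "x = vs ! (i - b)" using H by blast
    then have "x \<in> set vs" by auto
    then show "x \<in> {..<n}" using vs(2) by blast
  qed
qed (rule that)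

lemma local_coloring_exists:
  assumes "\<Union>H \<noteq> {}"
  shows "\<exists>k f. local_coloring n r H k f"
proof -
  obtain h where h: "bij_betw h (Pow {..<n}) {0..<card (Pow {..<n})}"
    using ex_bij_betw_finite_nat[of "Pow {..<n}"] by blast
  define f where "f = (\<lambda>(v::nat) e. h e)"
  have "local_coloring n r H (card (Pow {..<n})) f"
    unfolding local_coloring_def
  proof (intro conjI allI impI)
    show "f v e < card (Pow {..<n})" if "v < n" "e \<subseteq> {..<n} \<and> card e = r" for v e
      using h that unfolding f_def bij_betw_def by auto
    fix T assume "is_copy n H T"
    then obtain \<phi> where "\<phi> ` \<Union>H \<subseteq> {..<n}" "T = (\<lambda>e. \<phi> ` e) ` H"
      unfolding is_copy_def by blast
    moreover from assms obtain v where "v \<in> \<Union>H" by blast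
    ultimately have "\<phi> v \<in> \<Union>T" "T \<subseteq> Pow {..<n}" by auto
    moreover have "inj_on (f u) (Pow {..<n})" for u
      using h unfolding f_def bij_betw_def by simp
    ultimately show "\<exists>u\<in>\<Union>T. inj_on (f u) T" by (blast intro: inj_on_subset)
  qed
  then show ?thesis by blast
qed

lemma C_local_coloring:
  assumes "\<Union>H \<noteq> {}"
  shows "\<exists>f. local_coloring n r H (C r n H) f"
  unfolding C_def by (rule LeastI_ex) (use local_coloring_exists[OF assms] in blast)

lemma local_coloring_colours_pos:
  assumes "local_coloring n r H k f" and "r \<le> n" and "0 < n"
  shows "k \<ge> 1"
  using local_coloring_colour_lt[OF assms(1) assms(3), of "{..<r}"] assms(2) by simp

section \<open>Counting monochromatic pairs and triples\<close>

lemma convex_on_power_nonneg: "convex_on {0::real..} (\<lambda>x. x ^ p)"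
proof (cases "even p")
  case True
  then show ?thesis by (rule convex_on_subset[OF convex_power_even]) auto
qed (rule convex_power_odd)

lemma power_sum_le_card_power_sum_power:
  fixes a :: "'i \<Rightarrow> real"
  assumes "finite I" and "\<And>i. i \<in> I \<Longrightarrow> a i \<ge> 0" and "p \<ge> 1"
  shows "(\<Sum>i\<in>I. a i) ^ p \<le> real (card I) ^ (p - 1) * (\<Sum>i\<in>I. a i ^ p)"
proof (cases "I = {}")
  case True
  with assms(3) show ?thesis by (simp add: power_0_left)
next
  case False
  define c where "c = real (card I)"
  have c: "c > 0" using assms(1) False by (simp add: c_def card_gt_0_iff)
  obtain q where p: "p = Suc q" using assms(3) by (cases p) auto
  have "(\<Sum>i\<in>I. (1 / c) *\<^sub>R a i) ^ p \<le> (\<Sum>i\<in>I. (1 / c) * a i ^ p)"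
    using assms c by (intro convex_on_sum[OF assms(1) False convex_on_power_nonneg]) (auto simp: c_def)
  then have "((\<Sum>i\<in>I. a i) / c) ^ p \<le> (\<Sum>i\<in>I. a i ^ p) / c"
    by (simp add: sum_divide_distrib)
  then have "(\<Sum>i\<in>I. a i) ^ p \<le> c ^ p * (\<Sum>i\<in>I. a i ^ p) / c"
    using c by (simp add: power_divide divide_le_eq field_simps)
  also have "\<dots> = c ^ (p - 1) * (\<Sum>i\<in>I. a i ^ p)"
    using c by (simp add: p)
  finally show ?thesis by (simp add: c_def)
qed

lemma card_eq_sum_card_fibres:
  assumes "finite D"
  shows "card D = (\<Sum>c\<in>\<kappa> ` D. card {x\<in>D. \<kappa> x = c})"
  using sum.image_gen[OF assms, of "\<lambda>_. 1::nat" \<kappa>] by simp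

lemma card_same_colour_pairs:
  assumes "finite D"
  shows "card {(x, y). x \<in> D \<and> y \<in> D \<and> \<kappa> x = \<kappa> y} = (\<Sum>c\<in>\<kappa> ` D. card {x\<in>D. \<kappa> x = c} ^ 2)"
proof -
  have "{(x, y). x \<in> D \<and> y \<in> D \<and> \<kappa> x = \<kappa> y}
      = (\<Union>c\<in>\<kappa> ` D. {x\<in>D. \<kappa> x = c} \<times> {x\<in>D. \<kappa> x = c})"
    by auto
  also have "card \<dots> = (\<Sum>c\<in>\<kappa> ` D. card ({x\<in>D. \<kappa> x = c} \<times> {x\<in>D. \<kappa> x = c}))"
    using assms by (intro card_UN_disjoint) auto
  finally show ?thesis by (simp add: card_cartesian_product power2_eq_square)
qed

lemma card_same_colour_triples:
  assumes "finite D"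
  shows "card {(x, y, z). x \<in> D \<and> y \<in> D \<and> z \<in> D \<and> \<kappa> x = \<kappa> y \<and> \<kappa> y = \<kappa> z}
       = (\<Sum>c\<in>\<kappa> ` D. card {x\<in>D. \<kappa> x = c} ^ 3)"
proof -
  have "{(x, y, z). x \<in> D \<and> y \<in> D \<and> z \<in> D \<and> \<kappa> x = \<kappa> y \<and> \<kappa> y = \<kappa> z}
      = (\<Union>c\<in>\<kappa> ` D. {x\<in>D. \<kappa> x = c} \<times> {x\<in>D. \<kappa> x = c} \<times> {x\<in>D. \<kappa> x = c})"
    by auto
  also have "card \<dots> = (\<Sum>c\<in>\<kappa> ` D. card ({x\<in>D. \<kappa> x = c} \<times> {x\<in>D. \<kappa> x = c} \<times> {x\<in>D. \<kappa> x = c}))"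
    using assms by (intro card_UN_disjoint) auto
  finally show ?thesis by (simp add: card_cartesian_product power3_eq_cube mult.assoc)
qed

lemma card_power_le_sum_fibre_powers:
  assumes "finite D" and "card (\<kappa> ` D) \<le> K" and "p \<ge> 1"
  shows "real (card D) ^ p \<le> real K ^ (p - 1) * (\<Sum>c\<in>\<kappa> ` D. real (card {x\<in>D. \<kappa> x = c}) ^ p)"
proof -
  have "real (card D) ^ p = (\<Sum>c\<in>\<kappa> ` D. real (card {x\<in>D. \<kappa> x = c})) ^ p"
    by (subst card_eq_sum_card_fibres[OF assms(1)]) simp
  also have "\<dots> \<le> real (card (\<kappa> ` D)) ^ (p - 1) * (\<Sum>c\<in>\<kappa> ` D. real (card {x\<in>D. \<kappa> x = c}) ^ p)"
    using assms by (intro power_sum_le_card_power_sum_power) auto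
  also have "\<dots> \<le> real K ^ (p - 1) * (\<Sum>c\<in>\<kappa> ` D. real (card {x\<in>D. \<kappa> x = c}) ^ p)"
    using assms(2) by (intro mult_right_mono power_mono) (auto simp: sum_nonneg)
  finally show ?thesis .
qed

lemma card_squared_le_same_colour_pairs:
  assumes "finite D" and "card (\<kappa> ` D) \<le> K"
  shows "real (card D) ^ 2 \<le> real K * card {(x, y). x \<in> D \<and> y \<in> D \<and> \<kappa> x = \<kappa> y}"
  using card_power_le_sum_fibre_powers[OF assms, of 2]
  by (simp add: card_same_colour_pairs[OF assms(1)])

lemma card_cubed_le_same_colour_triples:
  assumes "finite D" and "card (\<kappa> ` D) \<le> K"
  shows "real (card D) ^ 3
    \<le> real K ^ 2 * card {(x, y, z). x \<in> D \<and> y \<in> D \<and> z \<in> D \<and> \<kappa> x = \<kappa> y \<and> \<kappa> y = \<kappa> z}"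
  using card_power_le_sum_fibre_powers[OF assms, of 3]
  by (simp only: card_same_colour_triples[OF assms(1)]) simp

lemma exists_ge_average:
  fixes N :: "'p \<Rightarrow> nat"
  assumes "finite P" and "P \<noteq> {}" and "card P \<le> B"
  obtains p where "p \<in> P" and "(\<Sum>q\<in>P. N q) \<le> N p * B"
proof -
  have "Max (N ` P) \<in> N ` P" using assms(1,2) by simp
  then obtain p where p: "p \<in> P" "N p = Max (N ` P)" by (metis imageE)
  have "(\<Sum>q\<in>P. N q) \<le> card P * N p"
    using sum_bounded_above[of P N "N p"] assms(1) p by simp
  also have "\<dots> \<le> N p * B" using assms(3) by simp
  finally show thesis using that p(1) by blast
qed

lemma sum_card_eq_sum_card:
  assumes "finite A" and "finite P"
  shows "(\<Sum>a\<in>A. card {p\<in>P. R a p}) = (\<Sum>p\<in>P. card {a\<in>A. R a p})"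
  using assms by (intro sum_multicount_gen) auto

lemma distinct_same_colour_pairs_lower_bound:
  assumes D: "finite D" and K: "card (\<kappa> ` D) \<le> K" "K > 0"
  shows "real (card D) ^ 2 / real K - card D \<le> card {(x, y). x \<in> D \<and> y \<in> D \<and> x \<noteq> y \<and> \<kappa> x = \<kappa> y}"
proof -
  let ?S = "{(x, y). x \<in> D \<and> y \<in> D \<and> \<kappa> x = \<kappa> y}"
  let ?S' = "{(x, y). x \<in> D \<and> y \<in> D \<and> x \<noteq> y \<and> \<kappa> x = \<kappa> y}"
  have "?S \<subseteq> ?S' \<union> (\<lambda>x. (x, x)) ` D" by auto
  then have "card ?S \<le> card (?S' \<union> (\<lambda>x. (x, x)) ` D)"
    using D by (intro card_mono) (auto intro: finite_subset[of _ "D \<times> D"])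
  also have "\<dots> \<le> card ?S' + card D"
    using card_Un_le[of ?S' "(\<lambda>x. (x, x)) ` D"] card_image_le[OF D, of "\<lambda>x. (x, x)"] by linarith
  finally have "real (card ?S) \<le> card ?S' + card D" by linarith
  moreover have "real (card D) ^ 2 / real K \<le> card ?S"
    using card_squared_le_same_colour_pairs[OF D K(1)] K(2) by (simp add: field_simps)
  ultimately show ?thesis by linarith
qed

lemma distinct_same_colour_triples_lower_bound:
  assumes D: "finite D" and K: "card (\<kappa> ` D) \<le> K" "K > 0"
  shows "real (card D) ^ 3 / real K ^ 2 - 3 * real (card D) ^ 2
    \<le> card {(x, y, z). x \<in> D \<and> y \<in> D \<and> z \<in> D \<and> x \<noteq> y \<and> y \<noteq> z \<and> x \<noteq> z \<and> \<kappa> x = \<kappa> y \<and> \<kappa> y = \<kappa> z}"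
proof -
  let ?S = "{(x, y, z). x \<in> D \<and> y \<in> D \<and> z \<in> D \<and> \<kappa> x = \<kappa> y \<and> \<kappa> y = \<kappa> z}"
  let ?S' = "{(x, y, z). x \<in> D \<and> y \<in> D \<and> z \<in> D \<and> x \<noteq> y \<and> y \<noteq> z \<and> x \<noteq> z \<and> \<kappa> x = \<kappa> y \<and> \<kappa> y = \<kappa> z}"
  let ?B1 = "(\<lambda>(x, z). (x, x, z)) ` (D \<times> D)"
  let ?B2 = "(\<lambda>(x, y). (x, y, y)) ` (D \<times> D)"
  let ?B3 = "(\<lambda>(x, y). (x, y, x)) ` (D \<times> D)"
  have "card (?B1 \<union> ?B2 \<union> ?B3) \<le> card ?B1 + card ?B2 + card ?B3"
    by (meson add_le_mono card_Un_le le_trans order_refl)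
  also have "\<dots> \<le> card (D \<times> D) + card (D \<times> D) + card (D \<times> D)"
    by (intro add_mono card_image_le) (auto simp: D)
  finally have diagonal: "card (?B1 \<union> ?B2 \<union> ?B3) \<le> 3 * card D ^ 2"
    by (simp add: card_cartesian_product power2_eq_square)
  have "?S \<subseteq> ?S' \<union> (?B1 \<union> ?B2 \<union> ?B3)" by (auto simp: image_iff)
  then have "card ?S \<le> card (?S' \<union> (?B1 \<union> ?B2 \<union> ?B3))"
    using D by (intro card_mono) (auto intro: finite_subset[of _ "D \<times> D \<times> D"])
  also have "\<dots> \<le> card ?S' + 3 * card D ^ 2"
    using card_Un_le[of ?S' "?B1 \<union> ?B2 \<union> ?B3"] diagonal by linarith
  finally have "real (card ?S) \<le> real (card ?S' + 3 * card D ^ 2)" by (simp only: of_nat_le_iff)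
  moreover have "real (card D) ^ 3 / real K ^ 2 \<le> card ?S"
    using card_cubed_le_same_colour_triples[OF D K(1)] K(2) by (simp add: field_simps)
  ultimately show ?thesis by simp
qed

lemma popular_same_colour_pair:
  fixes D :: "'a \<Rightarrow> 'b set" and \<kappa> :: "'a \<Rightarrow> 'b \<Rightarrow> 'c"
  assumes A: "finite A" and U: "finite U" "card U \<ge> 2"
    and DU: "\<And>a. a \<in> A \<Longrightarrow> D a \<subseteq> U"
    and K: "\<And>a. a \<in> A \<Longrightarrow> card (\<kappa> a ` D a) \<le> K" "K > 0"
  obtains x y where "x \<in> U" "y \<in> U" "x \<noteq> y"
    and "(\<Sum>a\<in>A. real (card (D a)) ^ 2 / real K - card (D a))
           \<le> card {a\<in>A. x \<in> D a \<and> y \<in> D a \<and> \<kappa> a x = \<kappa> a y} * real (card U) ^ 2"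
proof -
  define P where "P = {(x, y) \<in> U \<times> U. x \<noteq> y}"
  define R where "R a = (\<lambda>(x, y). x \<in> D a \<and> y \<in> D a \<and> \<kappa> a x = \<kappa> a y)" for a
  have "P \<subseteq> U \<times> U" by (auto simp: P_def)
  then have P: "finite P" "card P \<le> card U ^ 2"
    using U(1) card_mono[of "U \<times> U" P] finite_subset[of P "U \<times> U"]
    by (auto simp: card_cartesian_product power2_eq_square)
  obtain B where "B \<subseteq> U" "card B = 2" using U(2) by (meson obtain_subset_with_card_n)
  then have "P \<noteq> {}" by (auto simp: P_def card_2_iff)
  have eq: "{p\<in>P. R a p} = {(x, y). x \<in> D a \<and> y \<in> D a \<and> x \<noteq> y \<and> \<kappa> a x = \<kappa> a y}" if "a \<in> A" for a
    using DU[OF that] by (auto simp: P_def R_def)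
  have "(\<Sum>a\<in>A. real (card (D a)) ^ 2 / real K - card (D a)) \<le> (\<Sum>a\<in>A. real (card {p\<in>P. R a p}))"
    (is "sum ?f A \<le> sum ?g A")
  proof (rule sum_mono)
    fix a assume a: "a \<in> A"
    have "finite (D a)" using DU[OF a] U(1) by (rule finite_subset)
    from distinct_same_colour_pairs_lower_bound[OF this K(1)[OF a] K(2)] eq[OF a]
    show "?f a \<le> ?g a" by simp
  qed
  also have "\<dots> = real (\<Sum>p\<in>P. card {a\<in>A. R a p})"
    unfolding sum_card_eq_sum_card[OF A P(1), of R, symmetric] by simp
  also obtain p where "p \<in> P" and "(\<Sum>p\<in>P. card {a\<in>A. R a p}) \<le> card {a\<in>A. R a p} * card U ^ 2"
    using exists_ge_average[OF P(1) \<open>P \<noteq> {}\<close> P(2)] .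
  then have "real (\<Sum>p\<in>P. card {a\<in>A. R a p}) \<le> real (card {a\<in>A. R a p} * card U ^ 2)"
    by (simp only: of_nat_le_iff)
  also have "\<dots> = card {a\<in>A. R a p} * real (card U) ^ 2" by simp
  finally show thesis using that \<open>p \<in> P\<close> by (auto simp: P_def R_def)
qed

lemma popular_same_colour_triple:
  fixes D :: "'a \<Rightarrow> 'b set" and \<kappa> :: "'a \<Rightarrow> 'b \<Rightarrow> 'c"
  assumes A: "finite A" and U: "finite U" "card U \<ge> 3"
    and DU: "\<And>a. a \<in> A \<Longrightarrow> D a \<subseteq> U"
    and K: "\<And>a. a \<in> A \<Longrightarrow> card (\<kappa> a ` D a) \<le> K" "K > 0"
  obtains x y z where "x \<in> U" "y \<in> U" "z \<in> U" "x \<noteq> y" "y \<noteq> z" "x \<noteq> z"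
    and "(\<Sum>a\<in>A. real (card (D a)) ^ 3 / real K ^ 2 - 3 * real (card (D a)) ^ 2)
           \<le> card {a\<in>A. x \<in> D a \<and> y \<in> D a \<and> z \<in> D a \<and> \<kappa> a x = \<kappa> a y \<and> \<kappa> a y = \<kappa> a z}
              * real (card U) ^ 3"
proof -
  define P where "P = {(x, y, z) \<in> U \<times> U \<times> U. x \<noteq> y \<and> y \<noteq> z \<and> x \<noteq> z}"
  define R where "R a = (\<lambda>(x, y, z). x \<in> D a \<and> y \<in> D a \<and> z \<in> D a \<and> \<kappa> a x = \<kappa> a y \<and> \<kappa> a y = \<kappa> a z)"
    for a
  have "P \<subseteq> U \<times> U \<times> U" by (auto simp: P_def)
  then have P: "finite P" "card P \<le> card U ^ 3"
    using U(1) card_mono[of "U \<times> U \<times> U" P] finite_subset[of P "U \<times> U \<times> U"]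
    by (auto simp: card_cartesian_product power3_eq_cube)
  obtain B where "B \<subseteq> U" "card B = 3" using U(2) by (meson obtain_subset_with_card_n)
  then have "P \<noteq> {}" by (auto simp: P_def card_3_iff)
  have eq: "{p\<in>P. R a p}
      = {(x, y, z). x \<in> D a \<and> y \<in> D a \<and> z \<in> D a \<and> x \<noteq> y \<and> y \<noteq> z \<and> x \<noteq> z \<and> \<kappa> a x = \<kappa> a y \<and> \<kappa> a y = \<kappa> a z}"
    if "a \<in> A" for a
    using DU[OF that] by (auto simp: P_def R_def)
  have "(\<Sum>a\<in>A. real (card (D a)) ^ 3 / real K ^ 2 - 3 * real (card (D a)) ^ 2)
      \<le> (\<Sum>a\<in>A. real (card {p\<in>P. R a p}))" (is "sum ?f A \<le> sum ?g A")
  proof (rule sum_mono)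
    fix a assume a: "a \<in> A"
    have "finite (D a)" using DU[OF a] U(1) by (rule finite_subset)
    from distinct_same_colour_triples_lower_bound[OF this K(1)[OF a] K(2)] eq[OF a]
    show "?f a \<le> ?g a" by simp
  qed
  also have "\<dots> = real (\<Sum>p\<in>P. card {a\<in>A. R a p})"
    unfolding sum_card_eq_sum_card[OF A P(1), of R, symmetric] by simp
  also obtain p where "p \<in> P" and "(\<Sum>p\<in>P. card {a\<in>A. R a p}) \<le> card {a\<in>A. R a p} * card U ^ 3"
    using exists_ge_average[OF P(1) \<open>P \<noteq> {}\<close> P(2)] .
  then have "real (\<Sum>p\<in>P. card {a\<in>A. R a p}) \<le> real (card {a\<in>A. R a p} * card U ^ 3)"
    by (simp only: of_nat_le_iff)
  also have "\<dots> = card {a\<in>A. R a p} * real (card U) ^ 3" by simp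
  finally show thesis using that \<open>p \<in> P\<close> by (auto simp: P_def R_def)
qed

lemma colour_collision:
  assumes "col ` G \<subseteq> B" and "finite B" and "card B < card G"
  obtains i j where "i \<in> G" "j \<in> G" "i \<noteq> j" "col i = col j"
proof -
  have "card (col ` G) < card G" using assms card_mono[of B "col ` G"] by linarith
  then have "\<not> inj_on col G" by (rule pigeonhole)
  then show thesis using that unfolding inj_on_def by blast
qed

section \<open>The paths SP1 and SP2\<close>

lemma SP2_4: "SP2 4 = {{1,2,3},{2,3,4},{4,5,6},{5,6,7}}"
  by (simp add: SP2_def lessThan_Suc numeral_eq_Suc insert_commute)

lemma SP1_4: "SP1 4 = {{1,2,3},{3,4,5},{4,5,6},{6,7,8}}"
  by (simp add: SP1_def lessThan_Suc numeral_eq_Suc insert_commute)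

lemma s1_eq: "s1 i = i + (i + 1) div 2 + 1"
  by (induction i) auto

lemma s2_eq: "s2 i = i + i div 2 + 1"
  by (induction i) auto

lemma Union_SP1_subset: "\<Union>(SP1 t) \<subseteq> {1..<2 * t + 2}"
  by (auto simp: SP1_def s1_eq)

lemma Union_SP2_subset: "\<Union>(SP2 t) \<subseteq> {1..<2 * t + 2}"
  by (auto simp: SP2_def s2_eq)

lemma SP1_edges:
  assumes "t \<ge> 5"
  shows "{1,2,3} \<in> SP1 t" "{3,4,5} \<in> SP1 t" "{6,7,8} \<in> SP1 t" "{7,8,9} \<in> SP1 t"
  unfolding SP1_def
proof -
  have v: "s1 0 = 1" "s1 1 = 3" "s1 3 = 6" "s1 4 = 7" by (simp_all add: s1_eq)
  show "{1,2,3} \<in> (\<lambda>i. {s1 i, s1 i + 1, s1 i + 2}) ` {..<t}"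
    by (rule image_eqI[where x=0]) (use assms in \<open>auto simp: v\<close>)
  show "{3,4,5} \<in> (\<lambda>i. {s1 i, s1 i + 1, s1 i + 2}) ` {..<t}"
    by (rule image_eqI[where x=1]) (use assms in \<open>auto simp: v\<close>)
  show "{6,7,8} \<in> (\<lambda>i. {s1 i, s1 i + 1, s1 i + 2}) ` {..<t}"
    by (rule image_eqI[where x=3]) (use assms in \<open>auto simp: v\<close>)
  show "{7,8,9} \<in> (\<lambda>i. {s1 i, s1 i + 1, s1 i + 2}) ` {..<t}"
    by (rule image_eqI[where x=4]) (use assms in \<open>auto simp: v\<close>)
qed

lemma SP2_edges:
  assumes "t \<ge> 5"
  shows "{1,2,3} \<in> SP2 t" "{2,3,4} \<in> SP2 t" "{5,6,7} \<in> SP2 t" "{7,8,9} \<in> SP2 t"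
  unfolding SP2_def
proof -
  have v: "s2 0 = 1" "s2 1 = 2" "s2 3 = 5" "s2 4 = 7" by (simp_all add: s2_eq)
  show "{1,2,3} \<in> (\<lambda>i. {s2 i, s2 i + 1, s2 i + 2}) ` {..<t}"
    by (rule image_eqI[where x=0]) (use assms in \<open>auto simp: v\<close>)
  show "{2,3,4} \<in> (\<lambda>i. {s2 i, s2 i + 1, s2 i + 2}) ` {..<t}"
    by (rule image_eqI[where x=1]) (use assms in \<open>auto simp: v\<close>)
  show "{5,6,7} \<in> (\<lambda>i. {s2 i, s2 i + 1, s2 i + 2}) ` {..<t}"
    by (rule image_eqI[where x=3]) (use assms in \<open>auto simp: v\<close>)
  show "{7,8,9} \<in> (\<lambda>i. {s2 i, s2 i + 1, s2 i + 2}) ` {..<t}"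
    by (rule image_eqI[where x=4]) (use assms in \<open>auto simp: v\<close>)
qed

section \<open>Polynomial bounds for SP2 4 and SP1 4\<close>

lemma SP2_4_inequality:
  fixes N q m :: real
  assumes q: "q \<ge> 1" and N: "N \<ge> 20 * q^7" and m: "2*m \<ge> N - 1"
  shows "q^3 * N^3 < m * ((N-2)^3 / q^4 - 3*(N-2)^2)"
proof -
  have q4: "q^4 \<ge> 1" using q by (simp add: one_le_power)
  have q74: "q^7 \<ge> q^4" using q by (intro power_increasing) auto
  have N20: "N \<ge> 20" using N q74 q4 by linarith
  have N_minus_2: "N - 2 \<ge> 6 * q^4" using N q74 q4 by linarith
  have ratio: "(N-2)/q^4 - 3 \<ge> (N-2)/(2*q^4)"
  proof -
    have "(N-2)/(2*q^4) \<ge> 3" using N_minus_2 q4 by (subst pos_le_divide_eq) auto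
    moreover have "(N-2)/q^4 = 2 * ((N-2)/(2*q^4))" using q4 by (simp add: divide_simps)
    ultimately show ?thesis by linarith
  qed
  have bracket: "(N-2)^3 / q^4 - 3*(N-2)^2 \<ge> (N-2)^3/(2*q^4)"
  proof -
    have "(N-2)^3 / q^4 - 3*(N-2)^2 = (N-2)^2 * ((N-2)/q^4 - 3)"
      using q4 by (simp add: field_simps power2_eq_square power3_eq_cube)
    also have "\<dots> \<ge> (N-2)^2 * ((N-2)/(2*q^4))" using ratio by (intro mult_left_mono) auto
    also have "(N-2)^2 * ((N-2)/(2*q^4)) = (N-2)^3/(2*q^4)" by (simp add: power2_eq_square power3_eq_cube)
    finally show ?thesis .
  qed
  have cube: "(N-2)^3 \<ge> N^3/2"
  proof -
    have "N - 2 \<ge> (4/5) * N" using N20 by linarith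
    then have "(N-2)^3 \<ge> ((4/5)*N)^3" using N20 by (intro power_mono) auto
    also have "((4/5)*N)^3 = (64/125) * N^3" by (simp add: power3_eq_cube)
    finally have cube_ge: "(N-2)^3 \<ge> (64/125) * N^3" .
    moreover have "N^3 \<ge> 0" using N20 by simp
    ultimately show ?thesis by linarith
  qed
  have m_ge: "m \<ge> N/3" using m N20 by linarith
  have "m * ((N-2)^3 / q^4 - 3*(N-2)^2) \<ge> (N/3) * ((N^3/2)/(2*q^4))"
  proof (rule mult_mono)
    show "N/3 \<le> m" by (rule m_ge)
    show "(N^3/2)/(2*q^4) \<le> (N-2)^3 / q^4 - 3*(N-2)^2"
      using bracket cube q4 by (smt (verit) divide_right_mono zero_le_power)
  qed (use N20 m_ge in auto)
  also have "(N/3) * ((N^3/2)/(2*q^4)) = N * N^3 / (12 * q^4)" by (simp add: field_simps)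
  finally have rhs: "m * ((N-2)^3 / q^4 - 3*(N-2)^2) \<ge> N * N^3 / (12 * q^4)" .
  have "q^3 * N^3 * (12 * q^4) = (12 * q^7) * N^3" by (simp add: algebra_simps power_add[symmetric])
  also have "\<dots> < N * N^3" using N N20 q by (intro mult_strict_right_mono) auto
  finally have lhs: "q^3 * N^3 * (12 * q^4) < N * N^3" .
  have "12*q^4 > 0" using q4 by linarith
  then have "q^3 * N^3 < N * N^3 / (12 * q^4)" using lhs by (simp add: pos_less_divide_eq)
  with rhs show ?thesis by linarith
qed

lemma triple_alike_for_many_pairs:
  assumes lc: "local_coloring n 3 H k f" and k: "k \<ge> 1" and nb: "real n \<ge> 20 * real k ^ 7"
  obtains x y z G where "x < n" "y < n" "z < n" "x \<noteq> y" "y \<noteq> z" "x \<noteq> z" "k ^ 3 < card G"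
    and "\<And>i. i \<in> G \<Longrightarrow> 2*i+1 < n \<and> x \<notin> {2*i, 2*i+1} \<and> y \<notin> {2*i, 2*i+1} \<and> z \<notin> {2*i, 2*i+1}
      \<and> (\<forall>u\<in>{2*i, 2*i+1}. f u {2*i, 2*i+1, x} = f u {2*i, 2*i+1, y} \<and> f u {2*i, 2*i+1, y} = f u {2*i, 2*i+1, z})"
proof -
  have "real k ^ 7 \<ge> 1" using k by simp
  then have n: "n \<ge> 20" using nb by linarith
  define m where "m = n div 2"
  define D where "D i = {..<n} - {2*i, 2*i+1}" for i
  define \<kappa> where "\<kappa> i z = (f (2*i) {2*i, 2*i+1, z}, f (2*i+1) {2*i, 2*i+1, z})" for i z
  have pair_lt: "2*i+1 < n" if "i < m" for i using that unfolding m_def by linarith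
  have card_D: "card (D i) = n - 2" if "i < m" for i
    using pair_lt[OF that] unfolding D_def by (subst card_Diff_subset) auto
  have colours: "card (\<kappa> i ` D i) \<le> k ^ 2" if i: "i \<in> {..<m}" for i
  proof -
    have "{2*i, 2*i+1, z} \<subseteq> {..<n}" "card {2*i, 2*i+1, z} = 3" if "z \<in> D i" for z
      using that pair_lt[of i] i by (auto simp: D_def)
    then have "\<kappa> i ` D i \<subseteq> {..<k} \<times> {..<k}"
      using local_coloring_colour_lt[OF lc] pair_lt[of i] i by (auto simp: \<kappa>_def)
    from card_mono[OF _ this] show ?thesis by (simp add: card_cartesian_product power2_eq_square)
  qed
  obtain x y z where xyz: "x \<in> {..<n}" "y \<in> {..<n}" "z \<in> {..<n}" "x \<noteq> y" "y \<noteq> z" "x \<noteq> z"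
    and avg: "(\<Sum>i\<in>{..<m}. real (card (D i)) ^ 3 / real (k ^ 2) ^ 2 - 3 * real (card (D i)) ^ 2)
       \<le> card {i\<in>{..<m}. x \<in> D i \<and> y \<in> D i \<and> z \<in> D i \<and> \<kappa> i x = \<kappa> i y \<and> \<kappa> i y = \<kappa> i z}
          * real (card {..<n}) ^ 3"
    by (rule popular_same_colour_triple[of "{..<m}" "{..<n}" D \<kappa> "k ^ 2", OF _ _ _ _ colours])
      (use n k in \<open>auto simp: D_def\<close>)
  define G where "G = {i\<in>{..<m}. x \<in> D i \<and> y \<in> D i \<and> z \<in> D i \<and> \<kappa> i x = \<kappa> i y \<and> \<kappa> i y = \<kappa> i z}"
  have "real k ^ 3 * real n ^ 3 < real m * ((real n - 2) ^ 3 / real k ^ 4 - 3 * (real n - 2) ^ 2)"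
    by (rule SP2_4_inequality) (use k nb in \<open>auto simp: m_def\<close>)
  also have "\<dots> = (\<Sum>i\<in>{..<m}. real (card (D i)) ^ 3 / real (k ^ 2) ^ 2 - 3 * real (card (D i)) ^ 2)"
    using n by (simp add: card_D of_nat_diff power_mult[symmetric])
  also have "\<dots> \<le> card G * real n ^ 3" using avg by (simp add: G_def)
  finally have "k ^ 3 < card G"
    using n by (simp add: of_nat_less_iff[symmetric] del: of_nat_less_iff)
  moreover have "2*i+1 < n \<and> x \<notin> {2*i, 2*i+1} \<and> y \<notin> {2*i, 2*i+1} \<and> z \<notin> {2*i, 2*i+1}
      \<and> (\<forall>u\<in>{2*i, 2*i+1}. f u {2*i, 2*i+1, x} = f u {2*i, 2*i+1, y} \<and> f u {2*i, 2*i+1, y} = f u {2*i, 2*i+1, z})"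
    if "i \<in> G" for i
    using that pair_lt[of i] by (auto simp: G_def D_def \<kappa>_def)
  ultimately show thesis using xyz that[of x y z G] by blast
qed

lemma SP2_4_bound:
  assumes lc: "local_coloring n 3 (SP2 4) k f" and k: "k \<ge> 1"
  shows "real n < 20 * real k ^ 7"
proof (rule ccontr)
  assume "\<not> ?thesis"
  then obtain x y z G where xyz: "x < n" "y < n" "z < n" "x \<noteq> y" "y \<noteq> z" "x \<noteq> z" "k ^ 3 < card G"
    and G: "\<And>i. i \<in> G \<Longrightarrow> 2*i+1 < n \<and> x \<notin> {2*i, 2*i+1} \<and> y \<notin> {2*i, 2*i+1} \<and> z \<notin> {2*i, 2*i+1}
      \<and> (\<forall>u\<in>{2*i, 2*i+1}. f u {2*i, 2*i+1, x} = f u {2*i, 2*i+1, y} \<and> f u {2*i, 2*i+1, y} = f u {2*i, 2*i+1, z})"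
    using triple_alike_for_many_pairs[OF lc k] by (metis not_less)
  define col where "col i = (f x {2*i, 2*i+1, y}, f y {2*i, 2*i+1, y}, f z {2*i, 2*i+1, y})" for i
  have "col ` G \<subseteq> {..<k} \<times> {..<k} \<times> {..<k}"
  proof -
    have "f u {2*i, 2*i+1, y} < k" if "u < n" "i \<in> G" for u i
      by (rule local_coloring_colour_lt[OF lc that(1)]) (use G[OF that(2)] xyz in auto)
    then show ?thesis using xyz by (auto simp: col_def)
  qed
  then obtain i i' where "i \<in> G" "i' \<in> G" "i \<noteq> i'" and col: "col i = col i'"
    by (rule colour_collision) (use xyz(7) in \<open>simp_all add: card_cartesian_product power3_eq_cube\<close>)
  note Gi = G[OF \<open>i \<in> G\<close>] and Gi' = G[OF \<open>i' \<in> G\<close>]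
  let ?vs = "[x, 2*i, 2*i+1, y, 2*i', 2*i'+1, z]"
  have parity: "2*i \<noteq> 2*i'+1" "2*i+1 \<noteq> 2*i'" by presburger+
  have "distinct ?vs" using xyz Gi Gi' parity \<open>i \<noteq> i'\<close> by auto
  moreover have "set ?vs \<subseteq> {..<n}" using xyz Gi Gi' by auto
  moreover have "\<Union>(SP2 4) \<subseteq> {1..<1 + length ?vs}" by (auto simp: SP2_4)
  ultimately obtain v where v: "v \<in> \<Union>(SP2 4)" and rainbow:
    "\<And>e e'. e \<in> SP2 4 \<Longrightarrow> e' \<in> SP2 4 \<Longrightarrow>
       f (?vs ! (v - 1)) ((\<lambda>j. ?vs ! (j - 1)) ` e) = f (?vs ! (v - 1)) ((\<lambda>j. ?vs ! (j - 1)) ` e')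
       \<Longrightarrow> e = e'"
    using local_coloring_list_copy[OF lc] by blast
  have img: "(\<lambda>j. ?vs ! (j - 1)) ` {1,2,3} = {x, 2*i, 2*i+1}"
    "(\<lambda>j. ?vs ! (j - 1)) ` {2,3,4} = {2*i, 2*i+1, y}"
    "(\<lambda>j. ?vs ! (j - 1)) ` {4,5,6} = {y, 2*i', 2*i'+1}"
    "(\<lambda>j. ?vs ! (j - 1)) ` {5,6,7} = {2*i', 2*i'+1, z}"
    by simp_all
  from v consider "v \<in> {1, 4, 7}" | "v \<in> {2, 3}" | "v \<in> {5, 6}" by (auto simp: SP2_4)
  then show False
  proof cases
    case 1
    then have "f (?vs ! (v - 1)) {2*i, 2*i+1, y} = f (?vs ! (v - 1)) {y, 2*i', 2*i'+1}"
      using col by (auto simp: col_def insert_commute)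
    then show False using rainbow[of "{2,3,4}" "{4,5,6}"] by (simp add: SP2_4 img) (simp add: set_eq_subset)
  next
    case 2
    then have "f (?vs ! (v - 1)) {x, 2*i, 2*i+1} = f (?vs ! (v - 1)) {2*i, 2*i+1, y}"
      using Gi by (auto simp: insert_commute)
    then show False using rainbow[of "{1,2,3}" "{2,3,4}"] by (simp add: SP2_4 img) (simp add: set_eq_subset)
  next
    case 3
    then have "f (?vs ! (v - 1)) {y, 2*i', 2*i'+1} = f (?vs ! (v - 1)) {2*i', 2*i'+1, z}"
      using Gi' by (auto simp: insert_commute)
    then show False using rainbow[of "{4,5,6}" "{5,6,7}"] by (simp add: SP2_4 img) (simp add: set_eq_subset)
  qed
qed

lemma SP1_4_inequality:
  fixes N q m :: real
  assumes q: "q \<ge> 1" and N: "N \<ge> 30 * q^8" and m: "2*m \<ge> N - 1"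
  shows "q^6 * m^3 < N * ((m-1)^3 / q^2 - 3 * m^2)"
proof -
  have q2: "q^2 \<ge> 1" using q by (simp add: one_le_power)
  have q82: "q^8 \<ge> q^2" using q by (intro power_increasing) auto
  have m14: "m \<ge> 14 * q^2" using N m q82 q2 by linarith
  have m5: "m \<ge> 5" using m14 q2 by linarith
  have cube: "(m-1)^3 \<ge> m^3/2"
  proof -
    have "m - 1 \<ge> (4/5) * m" using m5 by linarith
    then have "(m-1)^3 \<ge> ((4/5)*m)^3" using m5 by (intro power_mono) auto
    also have "((4/5)*m)^3 = (64/125) * m^3" by (simp add: power3_eq_cube)
    finally have cube_ge: "(m-1)^3 \<ge> (64/125) * m^3" .
    moreover have "m^3 \<ge> 0" using m5 by simp
    ultimately show ?thesis by linarith
  qed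
  have bracket: "(m-1)^3 / q^2 - 3 * m^2 \<ge> m^3 / (4*q^2)"
  proof -
    have "(m-1)^3 / q^2 \<ge> (m^3/2) / q^2" using cube q2 by (intro divide_right_mono) auto
    moreover have "m^3/(4*q^2) \<ge> 3 * m^2"
    proof -
      have "m^3 = m * m^2" by (simp add: power2_eq_square power3_eq_cube)
      moreover have "m * m^2 \<ge> (12 * q^2) * m^2"
        by (rule mult_right_mono) (use m14 q2 in linarith, simp)
      ultimately have lhs: "3 * m^2 * (4 * q^2) \<le> m^3" by (simp add: algebra_simps)
      have "4*q^2 > 0" using q2 by linarith
      then show ?thesis using lhs by (simp add: pos_le_divide_eq)
    qed
    moreover have "(m^3/2) / q^2 = 2 * (m^3/(4*q^2))" using q2 by (simp add: field_simps)
    ultimately show ?thesis by linarith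
  qed
  have "N * ((m-1)^3 / q^2 - 3 * m^2) \<ge> N * (m^3 / (4*q^2))"
    using bracket N q by (intro mult_left_mono) (auto intro: order_trans[OF _ N])
  moreover have "N * (m^3 / (4*q^2)) > q^6 * m^3"
  proof -
    have m_cube: "m^3 > 0" using m5 by simp
    have "q^6 * m^3 * (4 * q^2) = (4 * q^8) * m^3" by (simp add: algebra_simps power_add[symmetric])
    also have "\<dots> < N * m^3"
    proof (rule mult_strict_right_mono)
      have "q^8 \<ge> 1" using q by (simp add: one_le_power)
      then show "4 * q^8 < N" using N by linarith
    qed (rule m_cube)
    finally have lhs: "q^6 * m^3 * (4 * q^2) < N * m^3" .
    have "4*q^2 > 0" using q2 by linarith
    then have "q^6 * m^3 < N * m^3 / (4 * q^2)" using lhs by (simp add: pos_less_divide_eq)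
    then show ?thesis by simp
  qed
  ultimately show ?thesis by linarith
qed

lemma pairs_alike_for_many_vertices:
  assumes lc: "local_coloring n 3 H k f" and k: "k \<ge> 1" and nb: "real n \<ge> 30 * real k ^ 8"
  obtains i j l W where "i \<noteq> j" "j \<noteq> l" "i \<noteq> l" "2*i+1 < n" "2*j+1 < n" "2*l+1 < n" "k ^ 6 < card W"
    and "\<And>w. w \<in> W \<Longrightarrow> w < n \<and> w \<notin> {2*i, 2*i+1, 2*j, 2*j+1, 2*l, 2*l+1}
      \<and> f w {2*i, 2*i+1, w} = f w {2*j, 2*j+1, w} \<and> f w {2*j, 2*j+1, w} = f w {2*l, 2*l+1, w}"
proof -
  have "real k ^ 8 \<ge> 1" using k by simp
  then have n: "n \<ge> 30" using nb by linarith
  define m where "m = n div 2"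
  have m: "m \<ge> 15" using n unfolding m_def by linarith
  define D where "D w = {i\<in>{..<m}. w \<notin> {2*i, 2*i+1}}" for w
  define \<kappa> where "\<kappa> w i = f w {2*i, 2*i+1, w}" for w i
  have pair_lt: "2*i+1 < n" if "i < m" for i using that unfolding m_def by linarith
  have card_D: "m - 1 \<le> card (D w)" "card (D w) \<le> m" for w
  proof -
    have "{..<m} - {w div 2} \<subseteq> D w" unfolding D_def by auto
    from card_mono[OF _ this] show "m - 1 \<le> card (D w)"
      by (simp add: card_Diff_singleton_if D_def split: if_splits)
    show "card (D w) \<le> m" using card_mono[of "{..<m}" "D w"] by (auto simp: D_def)
  qed
  have colours: "card (\<kappa> w ` D w) \<le> k" if w: "w \<in> {..<n}" for w
  proof -
    have "f w {2*i, 2*i+1, w} < k" if "i \<in> D w" for i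
      by (rule local_coloring_colour_lt[OF lc]) (use w that pair_lt[of i] in \<open>auto simp: D_def\<close>)
    then have "\<kappa> w ` D w \<subseteq> {..<k}" by (auto simp: \<kappa>_def)
    from card_mono[OF _ this] show ?thesis by simp
  qed
  obtain i j l where ijl: "i \<in> {..<m}" "j \<in> {..<m}" "l \<in> {..<m}" "i \<noteq> j" "j \<noteq> l" "i \<noteq> l"
    and avg: "(\<Sum>w\<in>{..<n}. real (card (D w)) ^ 3 / real k ^ 2 - 3 * real (card (D w)) ^ 2)
       \<le> card {w\<in>{..<n}. i \<in> D w \<and> j \<in> D w \<and> l \<in> D w \<and> \<kappa> w i = \<kappa> w j \<and> \<kappa> w j = \<kappa> w l}
          * real (card {..<m}) ^ 3"
    by (rule popular_same_colour_triple[of "{..<n}" "{..<m}" D \<kappa> k, OF _ _ _ _ colours])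
      (use m k in \<open>auto simp: D_def\<close>)
  define G where "G = {w\<in>{..<n}. i \<in> D w \<and> j \<in> D w \<and> l \<in> D w \<and> \<kappa> w i = \<kappa> w j \<and> \<kappa> w j = \<kappa> w l}"
  have "real k ^ 6 * real m ^ 3 < real n * ((real m - 1) ^ 3 / real k ^ 2 - 3 * real m ^ 2)"
    by (rule SP1_4_inequality) (use k nb in \<open>auto simp: m_def\<close>)
  also have "\<dots> \<le> (\<Sum>w\<in>{..<n}. real (card (D w)) ^ 3 / real k ^ 2 - 3 * real (card (D w)) ^ 2)"
  proof -
    have "(real m - 1) ^ 3 / real k ^ 2 - 3 * real m ^ 2
        \<le> real (card (D w)) ^ 3 / real k ^ 2 - 3 * real (card (D w)) ^ 2" for w
    proof -
      have "real m - 1 \<le> card (D w)" "card (D w) \<le> real m" using card_D[of w] m by linarith+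
      then have "(real m - 1) ^ 3 \<le> real (card (D w)) ^ 3" "real (card (D w)) ^ 2 \<le> real m ^ 2"
        using m by (auto intro!: power_mono)
      then show ?thesis by (smt (verit) divide_right_mono zero_le_power2)
    qed
    from sum_mono[of "{..<n}", OF this] show ?thesis by simp
  qed
  also have "\<dots> \<le> card G * real m ^ 3" using avg by (simp add: G_def)
  finally have "k ^ 6 < card G"
    using m by (simp add: of_nat_less_iff[symmetric] del: of_nat_less_iff)
  moreover have "w < n \<and> w \<notin> {2*i, 2*i+1, 2*j, 2*j+1, 2*l, 2*l+1}
      \<and> f w {2*i, 2*i+1, w} = f w {2*j, 2*j+1, w} \<and> f w {2*j, 2*j+1, w} = f w {2*l, 2*l+1, w}"
    if "w \<in> G" for w
    using that by (auto simp: G_def D_def \<kappa>_def)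
  ultimately show thesis using ijl pair_lt that[of i j l G] by blast
qed

lemma SP1_4_bound:
  assumes lc: "local_coloring n 3 (SP1 4) k f" and k: "k \<ge> 1"
  shows "real n < 30 * real k ^ 8"
proof (rule ccontr)
  assume "\<not> ?thesis"
  then obtain i j l W where ijl: "i \<noteq> j" "j \<noteq> l" "i \<noteq> l" "2*i+1 < n" "2*j+1 < n" "2*l+1 < n"
    and "k ^ 6 < card W"
    and W: "\<And>w. w \<in> W \<Longrightarrow> w < n \<and> w \<notin> {2*i, 2*i+1, 2*j, 2*j+1, 2*l, 2*l+1}
      \<and> f w {2*i, 2*i+1, w} = f w {2*j, 2*j+1, w} \<and> f w {2*j, 2*j+1, w} = f w {2*l, 2*l+1, w}"
    using pairs_alike_for_many_vertices[OF lc k] by (metis not_less)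
  define col where "col w = (f (2*i) {2*i, 2*i+1, w}, f (2*i+1) {2*i, 2*i+1, w},
      f (2*j) {2*i, 2*i+1, w}, f (2*j+1) {2*i, 2*i+1, w}, f (2*l) {2*i, 2*i+1, w}, f (2*l+1) {2*i, 2*i+1, w})"
    for w
  have "col ` W \<subseteq> {..<k} \<times> {..<k} \<times> {..<k} \<times> {..<k} \<times> {..<k} \<times> {..<k}"
  proof -
    have "f u {2*i, 2*i+1, w} < k" if "u < n" "w \<in> W" for u w
      by (rule local_coloring_colour_lt[OF lc that(1)]) (use W[OF that(2)] ijl in auto)
    then show ?thesis using ijl by (auto simp: col_def)
  qed
  then obtain w w' where "w \<in> W" "w' \<in> W" "w \<noteq> w'" and col: "col w = col w'"
    by (rule colour_collision) (use \<open>k ^ 6 < card W\<close> in \<open>simp_all add: card_cartesian_product eval_nat_numeral\<close>)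
  note Ww = W[OF \<open>w \<in> W\<close>] and Ww' = W[OF \<open>w' \<in> W\<close>]
  let ?vs = "[2*j, 2*j+1, w, 2*i, 2*i+1, w', 2*l, 2*l+1]"
  have parity: "2*a \<noteq> 2*b+1" "2*b+1 \<noteq> 2*a" for a b :: nat by presburger+
  have "distinct ?vs" using Ww Ww' parity ijl \<open>w \<noteq> w'\<close> by auto
  moreover have "set ?vs \<subseteq> {..<n}" using Ww Ww' ijl by auto
  moreover have "\<Union>(SP1 4) \<subseteq> {1..<1 + length ?vs}" by (auto simp: SP1_4)
  ultimately obtain v where v: "v \<in> \<Union>(SP1 4)" and rainbow:
    "\<And>e e'. e \<in> SP1 4 \<Longrightarrow> e' \<in> SP1 4 \<Longrightarrow>
       f (?vs ! (v - 1)) ((\<lambda>q. ?vs ! (q - 1)) ` e) = f (?vs ! (v - 1)) ((\<lambda>q. ?vs ! (q - 1)) ` e')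
       \<Longrightarrow> e = e'"
    using local_coloring_list_copy[OF lc] by blast
  have img: "(\<lambda>q. ?vs ! (q - 1)) ` {1,2,3} = {2*j, 2*j+1, w}"
    "(\<lambda>q. ?vs ! (q - 1)) ` {3,4,5} = {w, 2*i, 2*i+1}"
    "(\<lambda>q. ?vs ! (q - 1)) ` {4,5,6} = {2*i, 2*i+1, w'}"
    "(\<lambda>q. ?vs ! (q - 1)) ` {6,7,8} = {w', 2*l, 2*l+1}"
    by simp_all
  from v consider "v = 3" | "v = 6" | "v \<in> {1, 2, 4, 5, 7, 8}" by (auto simp: SP1_4)
  then show False
  proof cases
    case 1
    then have "f (?vs ! (v - 1)) {2*j, 2*j+1, w} = f (?vs ! (v - 1)) {w, 2*i, 2*i+1}"
      using Ww by (simp add: insert_commute)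
    then show False using rainbow[of "{1,2,3}" "{3,4,5}"] by (simp add: SP1_4 img) (simp add: set_eq_subset)
  next
    case 2
    then have "f (?vs ! (v - 1)) {2*i, 2*i+1, w'} = f (?vs ! (v - 1)) {w', 2*l, 2*l+1}"
      using Ww' by (simp add: insert_commute)
    then show False using rainbow[of "{4,5,6}" "{6,7,8}"] by (simp add: SP1_4 img) (simp add: set_eq_subset)
  next
    case 3
    then have "f (?vs ! (v - 1)) {w, 2*i, 2*i+1} = f (?vs ! (v - 1)) {2*i, 2*i+1, w'}"
      using col by (auto simp: col_def insert_commute)
    then show False using rainbow[of "{3,4,5}" "{4,5,6}"] by (simp add: SP1_4 img) (simp add: set_eq_subset)
  qed
qed

section \<open>Forks: SP1 t and SP2 t for t \<ge> 5\<close>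

lemma pair_collision:
  assumes lc: "local_coloring n 3 H k f"
    and obs: "x < n" "y < n" and c: "c < n" "c \<notin> S"
    and S: "S \<subseteq> {..<n}" "2 * k ^ 2 + 2 \<le> card S"
  obtains r1 r2 r3 r4 where "distinct [r1, r2, r3, r4]" "{r1, r2, r3, r4} \<subseteq> S"
    and "\<forall>u\<in>{x, y}. f u {c, r1, r2} = f u {c, r3, r4}"
proof -
  have "finite S" using S(1) finite_subset by blast
  define ws where "ws = sorted_list_of_set S"
  have ws: "distinct ws" "set ws = S" "length ws = card S"
    using \<open>finite S\<close> by (simp_all add: ws_def)
  define col where "col s = (f x {c, ws ! (2*s), ws ! (2*s+1)}, f y {c, ws ! (2*s), ws ! (2*s+1)})" for s
  have pair: "ws ! (2*s) \<in> S" "ws ! (2*s+1) \<in> S" "ws ! (2*s) \<noteq> ws ! (2*s+1)" if "s < k^2 + 1" for s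
  proof -
    have "2*s+1 < length ws" using that S(2) ws(3) by linarith
    then show "ws ! (2*s) \<in> S" "ws ! (2*s+1) \<in> S" "ws ! (2*s) \<noteq> ws ! (2*s+1)"
      using ws by (auto simp: nth_eq_iff_index_eq)
  qed
  have "col ` {..<k^2 + 1} \<subseteq> {..<k} \<times> {..<k}"
  proof -
    have "f u {c, ws ! (2*s), ws ! (2*s+1)} < k" if "u < n" "s < k^2 + 1" for u s
    proof (rule local_coloring_colour_lt[OF lc that(1)])
      have "c \<noteq> ws ! (2*s)" "c \<noteq> ws ! (2*s+1)" using pair[OF that(2)] c(2) by auto
      then show "{c, ws ! (2*s), ws ! (2*s+1)} \<subseteq> {..<n}" "card {c, ws ! (2*s), ws ! (2*s+1)} = 3"
        using pair[OF that(2)] c(1) S(1) by auto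
    qed
    then show ?thesis using obs by (auto simp: col_def)
  qed
  then obtain s s' where "s \<in> {..<k^2 + 1}" "s' \<in> {..<k^2 + 1}" "s \<noteq> s'" "col s = col s'"
    by (rule colour_collision) (simp_all add: card_cartesian_product power2_eq_square)
  moreover have "2*s \<noteq> 2*s'+1" "2*s+1 \<noteq> 2*s'" by presburger+
  moreover have "2*s+1 < length ws" "2*s'+1 < length ws" using calculation(1,2) S(2) ws(3) by auto
  ultimately show thesis
    using that[of "ws ! (2*s)" "ws ! (2*s+1)" "ws ! (2*s')" "ws ! (2*s'+1)"] pair ws(1)
    by (auto simp: col_def nth_eq_iff_index_eq)
qed

lemma fork_inequality:
  fixes N q w M :: real
  assumes q: "q \<ge> 1" and w: "w * q^2 \<ge> N - 2" and N: "N \<ge> (2*M+12) * q^3" and M: "M \<ge> 0"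
  shows "(2*q^2+3+M) * w^2 \<le> (N-2) * ((w-1)^2/q - w)" and "w \<ge> 2"
proof -
  have q2: "q^2 \<ge> 1" and q3: "q^3 \<ge> 1" using q by (simp_all add: one_le_power)
  have q32: "q^3 \<ge> q^2" using power_increasing[of 2 3 q] q by simp
  have q3q: "q^3 \<ge> q" using power_increasing[of 1 3 q] q by simp
  have Mq: "2*M*q^3 \<ge> 2*M*q" using q3q M by (simp add: mult_left_mono)
  have N12: "N \<ge> 2*M*q^3 + 12*q^3" using N by (simp add: algebra_simps)
  have N_minus_2: "N - 2 \<ge> (2*q+4) * q^2"
  proof -
    have "(2*q+4)*q^2 = 2*q^3 + 4*q^2" by (simp add: algebra_simps power2_eq_square power3_eq_cube)
    moreover have "2*M*q^3 \<ge> 0" using M q3 q by (intro mult_nonneg_nonneg) auto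
    ultimately show ?thesis using N12 q32 q2 by linarith
  qed
  have w_ge: "w \<ge> 2*q+4"
  proof -
    have "(2*q+4) * q^2 \<le> w * q^2" using N_minus_2 w by linarith
    then show ?thesis using q2 q by (simp add: mult_le_cancel_right)
  qed
  then show "w \<ge> 2" using q by linarith
  have square: "(w-1)^2 - q*w \<ge> w^2/2"
  proof -
    have "(w-1)^2 - q*w - w^2/2 = w*(w/2 - q - 2) + 1" by (simp add: algebra_simps power2_eq_square)
    moreover have "w*(w/2 - q - 2) \<ge> 0" using w_ge q by (intro mult_nonneg_nonneg) auto
    ultimately show ?thesis by linarith
  qed
  have bracket: "(w-1)^2/q - w \<ge> w^2/(2*q)"
  proof -
    have "(w-1)^2/q - w = ((w-1)^2 - q*w)/q" using q by (simp add: field_simps)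
    also have "\<dots> \<ge> (w^2/2)/q" using square q by (intro divide_right_mono) auto
    finally show ?thesis by simp
  qed
  have N_minus_2_ge: "N - 2 \<ge> 2*q*(2*q^2+3+M)"
  proof -
    have "2*q*(2*q^2+3+M) = 4*q^3 + 6*q + 2*M*q" by (simp add: algebra_simps power2_eq_square power3_eq_cube)
    then show ?thesis using N12 Mq q3q q3 by linarith
  qed
  have pos: "2*q*(2*q^2+3+M) \<ge> 0" using q M by (intro mult_nonneg_nonneg) auto
  have "(N-2) * ((w-1)^2/q - w) \<ge> (2*q*(2*q^2+3+M)) * (w^2/(2*q))"
  proof -
    have N2: "N - 2 \<ge> 0" using N_minus_2_ge pos by linarith
    show ?thesis using bracket N_minus_2_ge q M pos N2 by (intro mult_mono) auto
  qed
  also have "(2*q*(2*q^2+3+M)) * (w^2/(2*q)) = (2*q^2+3+M) * w^2" using q by (simp add: field_simps)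
  finally show "(2*q^2+3+M) * w^2 \<le> (N-2) * ((w-1)^2/q - w)" .
qed

lemma vertices_alike_at_0_1:
  assumes lc: "local_coloring n 3 H k f" and k: "k \<ge> 1" and n: "n \<ge> 2"
  obtains W where "W \<subseteq> {2..<n}" "real n - 2 \<le> real (card W) * real k ^ 2"
    "\<forall>x\<in>W. \<forall>y\<in>W. f 0 {0, 1, x} = f 0 {0, 1, y} \<and> f 1 {0, 1, x} = f 1 {0, 1, y}"
proof -
  define \<kappa> where "\<kappa> z = (f 0 {0, 1, z}, f 1 {0, 1, z})" for z
  have "f u {0, 1, z} < k" if "u < n" "z \<in> {2..<n}" for u z
    using local_coloring_colour_lt[OF lc that(1)] that(2) by auto
  then have "\<kappa> \<in> {2..<n} \<rightarrow> {..<k} \<times> {..<k}" using n by (auto simp: \<kappa>_def)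
  then obtain \<gamma> where "card {2..<n} \<le> card (\<kappa> -` {\<gamma>} \<inter> {2..<n}) * card ({..<k} \<times> {..<k})"
    using pigeonhole_card[of \<kappa> "{2..<n}" "{..<k} \<times> {..<k}"] k by fastforce
  define W where "W = \<kappa> -` {\<gamma>} \<inter> {2..<n}"
  have "W \<subseteq> {2..<n}" by (auto simp: W_def)
  moreover have "n - 2 \<le> card W * k ^ 2"
    using \<open>card {2..<n} \<le> _\<close> by (simp add: W_def card_cartesian_product power2_eq_square)
  then have "real (n - 2) \<le> real (card W * k ^ 2)" by (simp only: of_nat_le_iff)
  then have "real n - 2 \<le> real (card W) * real k ^ 2" using n by (simp add: of_nat_diff)
  moreover have "\<forall>x\<in>W. \<forall>y\<in>W. f 0 {0, 1, x} = f 0 {0, 1, y} \<and> f 1 {0, 1, x} = f 1 {0, 1, y}"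
    by (auto simp: W_def \<kappa>_def)
  ultimately show thesis by (rule that)
qed

lemma edges_alike_for_many_vertices:
  assumes lc: "local_coloring n 3 H k f" and k: "k \<ge> 1" and n: "(2 * M + 12) * k ^ 3 \<le> n"
  obtains x y S where "x \<in> {2..<n}" "y \<in> {2..<n}" "x \<noteq> y" "S \<subseteq> {2..<n} - {x, y}"
    "2 * k ^ 2 + 3 + M \<le> card S" "\<forall>u\<in>{0, 1} \<union> S. f u {0, 1, x} = f u {0, 1, y}"
proof -
  have "12 * 1 \<le> (2 * M + 12) * k ^ 3" using k by (intro mult_mono) auto
  then have n12: "n \<ge> 12" using n by linarith
  have "n \<ge> 2" using n12 by simp
  then obtain W where W: "W \<subseteq> {2..<n}" "real n - 2 \<le> real (card W) * real k ^ 2"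
    and W01: "\<forall>x\<in>W. \<forall>y\<in>W. f 0 {0, 1, x} = f 0 {0, 1, y} \<and> f 1 {0, 1, x} = f 1 {0, 1, y}"
    by (rule vertices_alike_at_0_1[OF lc k])
  have "finite W" using W(1) finite_subset by blast
  have edge_lt: "f u {0, 1, z} < k" if "u < n" "z \<in> {2..<n}" for u z
    using local_coloring_colour_lt[OF lc that(1)] that(2) by auto
  have "(2 * real k ^ 2 + 3 + real M) * real (card W) ^ 2
      \<le> (real n - 2) * ((real (card W) - 1) ^ 2 / real k - real (card W))"
    and "real (card W) \<ge> 2"
  proof -
    have "real ((2 * M + 12) * k ^ 3) \<le> real n" using n by (simp only: of_nat_le_iff)
    then show "(2 * real k ^ 2 + 3 + real M) * real (card W) ^ 2
        \<le> (real n - 2) * ((real (card W) - 1) ^ 2 / real k - real (card W))"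
      and "real (card W) \<ge> 2"
      using fork_inequality[of "real k" "real n" "real (card W)" "real M"] k W(2) by auto
  qed
  define D where "D u = W - {u}" for u
  define \<kappa> where "\<kappa> u z = f u {0, 1, z}" for u z
  have colours: "card (\<kappa> u ` D u) \<le> k" if "u \<in> {2..<n}" for u
  proof -
    have "\<kappa> u ` D u \<subseteq> {..<k}" using edge_lt that W(1) by (auto simp: \<kappa>_def D_def)
    from card_mono[OF _ this] show ?thesis by simp
  qed
  obtain x y where xy: "x \<in> W" "y \<in> W" "x \<noteq> y"
    and avg: "(\<Sum>u\<in>{2..<n}. real (card (D u)) ^ 2 / real k - card (D u))
      \<le> card {u\<in>{2..<n}. x \<in> D u \<and> y \<in> D u \<and> \<kappa> u x = \<kappa> u y} * real (card W) ^ 2"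
    by (rule popular_same_colour_pair[of "{2..<n}" W D \<kappa> k, OF _ _ _ _ colours])
      (use W \<open>finite W\<close> \<open>real (card W) \<ge> 2\<close> k in \<open>auto simp: D_def\<close>)
  define Hs where "Hs = {u\<in>{2..<n}. x \<in> D u \<and> y \<in> D u \<and> \<kappa> u x = \<kappa> u y}"
  have "(2 * real k ^ 2 + 3 + real M) * real (card W) ^ 2
      \<le> (real n - 2) * ((real (card W) - 1) ^ 2 / real k - real (card W))" by fact
  also have "\<dots> \<le> (\<Sum>u\<in>{2..<n}. real (card (D u)) ^ 2 / real k - card (D u))"
  proof -
    have "(real (card W) - 1) ^ 2 / real k - real (card W) \<le> real (card (D u)) ^ 2 / real k - card (D u)"
      for u
    proof -
      have "real (card W) - 1 \<le> card (D u)" "card (D u) \<le> real (card W)"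
        using \<open>finite W\<close> by (auto simp: D_def card_Diff_singleton_if)
      then have "(real (card W) - 1) ^ 2 \<le> real (card (D u)) ^ 2"
        using \<open>real (card W) \<ge> 2\<close> by (intro power_mono) auto
      with \<open>card (D u) \<le> real (card W)\<close> show ?thesis by (smt (verit) divide_right_mono of_nat_0_le_iff)
    qed
    from sum_mono[of "{2..<n}", OF this] show ?thesis using n12 by simp
  qed
  also have "\<dots> \<le> card Hs * real (card W) ^ 2" using avg by (simp add: Hs_def)
  finally have "real (2 * k ^ 2 + 3 + M) \<le> real (card Hs)"
    using \<open>real (card W) \<ge> 2\<close> by (simp add: mult_le_cancel_right)
  then have card_Hs: "2 * k ^ 2 + 3 + M \<le> card Hs" by (simp only: of_nat_le_iff)
  moreover have "Hs \<subseteq> {2..<n} - {x, y}" "\<forall>u\<in>Hs. f u {0, 1, x} = f u {0, 1, y}"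
    by (auto simp: Hs_def D_def \<kappa>_def)
  moreover have "\<forall>u\<in>{0, 1}. f u {0, 1, x} = f u {0, 1, y}" using W01[rule_format, OF xy(1,2)] by simp
  ultimately show thesis using that[of x y Hs] xy W(1) by blast
qed

lemma fork_configuration:
  assumes lc: "local_coloring n 3 H k f" and k: "k \<ge> 1" and n: "(2 * M + 12) * k ^ 3 \<le> n"
  obtains x y c r1 r2 r3 r4 es where
    "distinct ([0, 1, x, y, c, r1, r2, r3, r4] @ es)" "set ([0, 1, x, y, c, r1, r2, r3, r4] @ es) \<subseteq> {..<n}"
    "length es = M"
    "\<forall>u\<in>{0, 1, c, r1, r2, r3, r4} \<union> set es. f u {0, 1, x} = f u {0, 1, y}"
    "\<forall>u\<in>{x, y}. f u {c, r1, r2} = f u {c, r3, r4}"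
proof -
  obtain x y Hs where x: "x \<in> {2..<n}" "y \<in> {2..<n}" "x \<noteq> y" and Hs: "Hs \<subseteq> {2..<n} - {x, y}"
    and card_Hs: "2 * k ^ 2 + 3 + M \<le> card Hs" and alike: "\<forall>u\<in>{0, 1} \<union> Hs. f u {0, 1, x} = f u {0, 1, y}"
    by (rule edges_alike_for_many_vertices[OF lc k n])
  have "finite Hs" using Hs finite_subset by blast
  from card_Hs obtain c where c: "c \<in> Hs" by fastforce
  obtain r1 r2 r3 r4 where r: "distinct [r1, r2, r3, r4]" "{r1, r2, r3, r4} \<subseteq> Hs - {c}"
    and fork: "\<forall>u\<in>{x, y}. f u {c, r1, r2} = f u {c, r3, r4}"
    by (rule pair_collision[OF lc, where x = x and y = y and c = c and S = "Hs - {c}"])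
      (use x c Hs card_Hs \<open>finite Hs\<close> in \<open>auto simp: card_Diff_singleton\<close>)
  have "card {c, r1, r2, r3, r4} = 5" using r by auto
  moreover have "{c, r1, r2, r3, r4} \<subseteq> Hs" using r c by auto
  moreover have "1 \<le> k ^ 2" using k by simp
  ultimately have "M \<le> card (Hs - {c, r1, r2, r3, r4})"
    using card_Hs \<open>finite Hs\<close> by (simp add: card_Diff_subset)
  then obtain B where B: "B \<subseteq> Hs - {c, r1, r2, r3, r4}" "card B = M" by (meson obtain_subset_with_card_n)
  have "finite B" using B(1) \<open>finite Hs\<close> finite_subset by blast
  show thesis
  proof (rule that[of x y c r1 r2 r3 r4 "sorted_list_of_set B"])
    show "distinct ([0, 1, x, y, c, r1, r2, r3, r4] @ sorted_list_of_set B)"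
      using x c r B(1) Hs \<open>finite B\<close> by auto
    show "set ([0, 1, x, y, c, r1, r2, r3, r4] @ sorted_list_of_set B) \<subseteq> {..<n}"
      using x c r B(1) Hs \<open>finite B\<close> by auto
    show "length (sorted_list_of_set B) = M" using B(2) by simp
    show "\<forall>u\<in>{0, 1, c, r1, r2, r3, r4} \<union> set (sorted_list_of_set B). f u {0, 1, x} = f u {0, 1, y}"
      using alike c r B(1) \<open>finite B\<close> by auto
  qed (use fork in blast)
qed

lemma no_fork_copy:
  assumes lc: "local_coloring n 3 H k f"
    and vs: "distinct vs" "set vs \<subseteq> {..<n}" "\<Union>H \<subseteq> {1..<1 + length vs}"
    and e: "e1 \<in> H" "e2 \<in> H" "e3 \<in> H" "e4 \<in> H" "e1 \<noteq> e2" "e3 \<noteq> e4"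
    and img: "(\<lambda>q. vs ! (q - 1)) ` e1 = {0, 1, x}" "(\<lambda>q. vs ! (q - 1)) ` e2 = {0, 1, y}"
      "(\<lambda>q. vs ! (q - 1)) ` e3 = {c, r1, r2}" "(\<lambda>q. vs ! (q - 1)) ` e4 = {c, r3, r4}"
    and fork: "\<forall>u\<in>set vs - {x, y}. f u {0, 1, x} = f u {0, 1, y}"
      "\<forall>u\<in>{x, y}. f u {c, r1, r2} = f u {c, r3, r4}"
  shows False
proof -
  obtain v where v: "v \<in> \<Union>H" and rainbow:
    "\<And>e e'. e \<in> H \<Longrightarrow> e' \<in> H \<Longrightarrow>
       f (vs ! (v - 1)) ((\<lambda>q. vs ! (q - 1)) ` e) = f (vs ! (v - 1)) ((\<lambda>q. vs ! (q - 1)) ` e')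
       \<Longrightarrow> e = e'"
    using local_coloring_list_copy[OF lc vs] by blast
  from v vs(3) have "v - 1 < length vs" by fastforce
  then have "vs ! (v - 1) \<in> set vs" by simp
  then show False
    using rainbow[OF e(1,2)] rainbow[OF e(3,4)] e(5,6) fork img by (cases "vs ! (v - 1) \<in> {x, y}") auto
qed

lemma SP1_bound:
  assumes t: "t \<ge> 5" and lc: "local_coloring n 3 (SP1 t) k f" and k: "k \<ge> 1"
  shows "n < (4 * t + 12) * k ^ 3"
proof (rule ccontr)
  assume "\<not> ?thesis"
  then have "(2 * (2 * t) + 12) * k ^ 3 \<le> n" by simp
  then obtain x y c r1 r2 r3 r4 es where conf:
    "distinct ([0, 1, x, y, c, r1, r2, r3, r4] @ es)" "set ([0, 1, x, y, c, r1, r2, r3, r4] @ es) \<subseteq> {..<n}"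
    "length es = 2 * t"
    "\<forall>u\<in>{0, 1, c, r1, r2, r3, r4} \<union> set es. f u {0, 1, x} = f u {0, 1, y}"
    "\<forall>u\<in>{x, y}. f u {c, r1, r2} = f u {c, r3, r4}"
    by (rule fork_configuration[OF lc k])
  let ?vs = "[r1, r2, c, r3, r4, x, 0, 1, y] @ es"
  show False
  proof (rule no_fork_copy[OF lc, of ?vs "{6,7,8}" "{7,8,9}" "{1,2,3}" "{3,4,5}"])
    show "distinct ?vs" "set ?vs \<subseteq> {..<n}" using conf(1,2) by auto
    show "\<Union>(SP1 t) \<subseteq> {1..<1 + length ?vs}" using Union_SP1_subset[of t] conf(3) by auto
    show "{6,7,8} \<in> SP1 t" "{7,8,9} \<in> SP1 t" "{1,2,3} \<in> SP1 t" "{3,4,5} \<in> SP1 t"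
      using SP1_edges[OF t] by blast+
    show "{6,7,8} \<noteq> {7,8,9::nat}" "{1,2,3} \<noteq> {3,4,5::nat}" by (simp_all add: set_eq_subset)
    show "(\<lambda>q. ?vs ! (q - 1)) ` {6,7,8} = {0, 1, x}" "(\<lambda>q. ?vs ! (q - 1)) ` {7,8,9} = {0, 1, y}"
      "(\<lambda>q. ?vs ! (q - 1)) ` {1,2,3} = {c, r1, r2}" "(\<lambda>q. ?vs ! (q - 1)) ` {3,4,5} = {c, r3, r4}"
      by (auto simp: nth_append)
    show "\<forall>u\<in>set ?vs - {x, y}. f u {0, 1, x} = f u {0, 1, y}" using conf(4) by auto
  qed (use conf(5) in blast)
qed

lemma SP2_bound:
  assumes t: "t \<ge> 5" and lc: "local_coloring n 3 (SP2 t) k f" and k: "k \<ge> 1"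
  shows "n < (4 * t + 12) * k ^ 3"
proof (rule ccontr)
  assume "\<not> ?thesis"
  then have "(2 * (2 * t) + 12) * k ^ 3 \<le> n" by simp
  then obtain x y c r1 r2 r3 r4 es where conf:
    "distinct ([0, 1, x, y, c, r1, r2, r3, r4] @ es)" "set ([0, 1, x, y, c, r1, r2, r3, r4] @ es) \<subseteq> {..<n}"
    "length es = 2 * t"
    "\<forall>u\<in>{0, 1, c, r1, r2, r3, r4} \<union> set es. f u {0, 1, x} = f u {0, 1, y}"
    "\<forall>u\<in>{x, y}. f u {c, r1, r2} = f u {c, r3, r4}"
    by (rule fork_configuration[OF lc k])
  let ?vs = "[x, 0, 1, y, r1, r2, c, r3, r4] @ es"
  show False
  proof (rule no_fork_copy[OF lc, of ?vs "{1,2,3}" "{2,3,4}" "{5,6,7}" "{7,8,9}"])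
    show "distinct ?vs" "set ?vs \<subseteq> {..<n}" using conf(1,2) by auto
    show "\<Union>(SP2 t) \<subseteq> {1..<1 + length ?vs}" using Union_SP2_subset[of t] conf(3) by auto
    show "{1,2,3} \<in> SP2 t" "{2,3,4} \<in> SP2 t" "{5,6,7} \<in> SP2 t" "{7,8,9} \<in> SP2 t"
      using SP2_edges[OF t] by blast+
    show "{1,2,3} \<noteq> {2,3,4::nat}" "{5,6,7} \<noteq> {7,8,9::nat}" by (simp_all add: set_eq_subset)
    show "(\<lambda>q. ?vs ! (q - 1)) ` {1,2,3} = {0, 1, x}" "(\<lambda>q. ?vs ! (q - 1)) ` {2,3,4} = {0, 1, y}"
      "(\<lambda>q. ?vs ! (q - 1)) ` {5,6,7} = {c, r1, r2}" "(\<lambda>q. ?vs ! (q - 1)) ` {7,8,9} = {c, r3, r4}"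
      by (auto simp: nth_append)
    show "\<forall>u\<in>set ?vs - {x, y}. f u {0, 1, x} = f u {0, 1, y}" using conf(4) by auto
  qed (use conf(5) in blast)
qed

section \<open>Homogeneous sequences: SP3\<close>

text \<open>Colours of vertex sets that are not edges (\<open>i = j\<close>) are unconstrained, so the profile
  truncates colours to \<open>{..<k}\<close>; all profiles of a prefix of length \<open>l\<close> then lie in a box
  of \<open>k ^ l ^ 3\<close> elements.\<close>

definition colour_profile :: "(nat \<Rightarrow> nat set \<Rightarrow> nat) \<Rightarrow> nat \<Rightarrow> nat list \<Rightarrow> nat \<Rightarrow> nat \<times> nat \<times> nat \<Rightarrow> nat"
  where "colour_profile f k vs z = (\<lambda>(p, i, j) \<in> {..<length vs} \<times> {..<length vs} \<times> {..<length vs}.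
     if f (vs ! p) {vs ! i, vs ! j, z} < k then f (vs ! p) {vs ! i, vs ! j, z} else 0)"

definition homogeneous :: "(nat \<Rightarrow> nat set \<Rightarrow> nat) \<Rightarrow> nat \<Rightarrow> nat list \<Rightarrow> nat set \<Rightarrow> bool"
  where "homogeneous f k vs X \<longleftrightarrow> (\<forall>s < length vs. \<forall>z \<in> set (drop (Suc s) vs) \<union> X. \<forall>z' \<in> set (drop (Suc s) vs) \<union> X.
     colour_profile f k (take (Suc s) vs) z = colour_profile f k (take (Suc s) vs) z')"

lemma colour_profile_in:
  assumes "k \<ge> 1"
  shows "colour_profile f k vs z \<in> ({..<length vs} \<times> {..<length vs} \<times> {..<length vs}) \<rightarrow>\<^sub>E {..<k}"
  using assms by (auto simp: colour_profile_def)

lemma homogeneous_snoc: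
  assumes hom: "homogeneous f k vs X" and "v \<in> X" and "X' \<subseteq> X"
    and new: "\<forall>z\<in>X'. \<forall>z'\<in>X'. colour_profile f k (vs @ [v]) z = colour_profile f k (vs @ [v]) z'"
  shows "homogeneous f k (vs @ [v]) X'"
  unfolding homogeneous_def
proof (intro allI impI ballI)
  fix s z z' assume s: "s < length (vs @ [v])"
    and z: "z \<in> set (drop (Suc s) (vs @ [v])) \<union> X'" and z': "z' \<in> set (drop (Suc s) (vs @ [v])) \<union> X'"
  show "colour_profile f k (take (Suc s) (vs @ [v])) z = colour_profile f k (take (Suc s) (vs @ [v])) z'"
  proof (cases "s < length vs")
    case True
    then have "take (Suc s) (vs @ [v]) = take (Suc s) vs"
      and "set (drop (Suc s) (vs @ [v])) = insert v (set (drop (Suc s) vs))" by simp_all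
    then have "z \<in> set (drop (Suc s) vs) \<union> X" "z' \<in> set (drop (Suc s) vs) \<union> X"
      and "take (Suc s) (vs @ [v]) = take (Suc s) vs"
      using z z' \<open>v \<in> X\<close> \<open>X' \<subseteq> X\<close> by auto
    with hom True show ?thesis unfolding homogeneous_def by metis
  next
    case False
    with s have "s = length vs" by simp
    then have "take (Suc s) (vs @ [v]) = vs @ [v]" "drop (Suc s) (vs @ [v]) = []" by simp_all
    moreover from this(2) z z' have "z \<in> X'" "z' \<in> X'" by simp_all
    ultimately show ?thesis using new by metis
  qed
qed

lemma homogeneous_colour_eq:
  assumes hom: "homogeneous f k vs X" and s: "s < length vs"
    and abc: "a \<in> set (take (Suc s) vs)" "b \<in> set (take (Suc s) vs)" "c \<in> set (take (Suc s) vs)"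
    and z: "z \<in> set (drop (Suc s) vs) \<union> X" "z' \<in> set (drop (Suc s) vs) \<union> X"
    and lt: "f a {b, c, z} < k" "f a {b, c, z'} < k"
  shows "f a {b, c, z} = f a {b, c, z'}"
proof -
  let ?ws = "take (Suc s) vs"
  obtain p i j where "p < length ?ws" "i < length ?ws" "j < length ?ws"
    and "a = ?ws ! p" "b = ?ws ! i" "c = ?ws ! j"
    using abc by (metis in_set_conv_nth)
  moreover have "colour_profile f k ?ws z (p, i, j) = colour_profile f k ?ws z' (p, i, j)"
    using hom s z unfolding homogeneous_def by metis
  ultimately show ?thesis using lt by (simp add: colour_profile_def)
qed

lemma homogeneous_extend:
  assumes k: "k \<ge> 1" and hom: "homogeneous f k vs X" and "finite X" and v: "v \<in> X"
  obtains X' where "X' \<subseteq> X - {v}" "card X - 1 \<le> card X' * k ^ (Suc (length vs) ^ 3)"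
    "homogeneous f k (vs @ [v]) X'"
proof -
  define B where "B = ({..<Suc (length vs)} \<times> {..<Suc (length vs)} \<times> {..<Suc (length vs)}) \<rightarrow>\<^sub>E {..<k}"
  have "colour_profile f k (vs @ [v]) z \<in> B" for z
    using colour_profile_in[OF k, of f "vs @ [v]" z] by (simp add: B_def)
  then have "colour_profile f k (vs @ [v]) \<in> (X - {v}) \<rightarrow> B" by blast
  moreover have "finite B" "B \<noteq> {}"
    using k by (auto simp: B_def PiE_eq_empty_iff lessThan_empty_iff intro!: finite_PiE)
  ultimately obtain c where c: "card (X - {v}) \<le> card (colour_profile f k (vs @ [v]) -` {c} \<inter> (X - {v})) * card B"
    using pigeonhole_card[of _ "X - {v}" B] \<open>finite X\<close> by auto
  define X' where "X' = colour_profile f k (vs @ [v]) -` {c} \<inter> (X - {v})"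
  have "card B = k ^ (Suc (length vs) ^ 3)"
    by (simp add: B_def card_PiE card_cartesian_product power3_eq_cube mult.assoc del: mult_Suc mult_Suc_right)
  with c have "card X - 1 \<le> card X' * k ^ (Suc (length vs) ^ 3)"
    using \<open>finite X\<close> v by (simp add: X'_def)
  moreover have "homogeneous f k (vs @ [v]) X'" using hom v by (rule homogeneous_snoc) (auto simp: X'_def)
  ultimately show thesis using that[of X'] by (auto simp: X'_def)
qed

lemma homogeneous_sequence_exists:
  assumes k: "k \<ge> 1" and n: "2 * (2 * k ^ (Suc T ^ 3)) ^ T \<le> n"
  obtains vs where "length vs = Suc T" "distinct vs" "set vs \<subseteq> {..<n}" "homogeneous f k vs {}"
proof -
  define K where "K = k ^ (Suc T ^ 3)"
  have K: "K \<ge> 1" using k by (simp add: K_def)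
  have "\<exists>vs X. length vs = t \<and> distinct vs \<and> set vs \<subseteq> {..<n} \<and> X \<subseteq> {..<n} - set vs
      \<and> 2 * (2 * K) ^ (T - t) \<le> card X \<and> homogeneous f k vs X" if "t \<le> T" for t
    using that
  proof (induction t)
    case 0
    show ?case
      by (intro exI[of _ "[]"] exI[of _ "{..<n}"]) (use n in \<open>simp add: K_def homogeneous_def\<close>)
  next
    case (Suc t)
    then obtain vs X where vs: "length vs = t" "distinct vs" "set vs \<subseteq> {..<n}"
      and X: "X \<subseteq> {..<n} - set vs" "2 * (2 * K) ^ (T - t) \<le> card X" and hom: "homogeneous f k vs X"
      by auto
    have "finite X" using X(1) finite_subset by blast
    define A where "A = (2 * K) ^ (T - Suc t)"
    have KA: "1 \<le> K * A" using K by (simp add: A_def)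
    have card_X: "4 * (K * A) \<le> card X"
      using X(2) Suc.prems by (simp add: A_def Suc_diff_Suc[symmetric] mult.assoc)
    moreover have "0 < 4 * (K * A)" using KA by simp
    ultimately obtain v where v: "v \<in> X" by (metis card.empty ex_in_conv not_le)
    obtain X' where X': "X' \<subseteq> X - {v}" "card X - 1 \<le> card X' * k ^ (Suc t ^ 3)"
      and hom': "homogeneous f k (vs @ [v]) X'"
      using homogeneous_extend[OF k hom \<open>finite X\<close> v] vs(1) by blast
    have "k ^ (Suc t ^ 3) \<le> K" unfolding K_def using k Suc.prems by (intro power_increasing power_mono) auto
    with X'(2) have "card X - 1 \<le> card X' * K" by (meson le_trans mult_le_mono2)
    then have "2 * (K * A) \<le> card X' * K" using card_X KA by linarith
    then have "2 * A * K \<le> card X' * K" by (metis mult.assoc mult.commute)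
    then have "2 * (2 * K) ^ (T - Suc t) \<le> card X'" using K by (simp add: A_def)
    moreover have "X' \<subseteq> {..<n} - set (vs @ [v])" using X(1) X'(1) by auto
    ultimately show ?case using vs X(1) v hom' by (intro exI[of _ "vs @ [v]"] exI[of _ X']) auto
  qed
  from this[of T] obtain vs X where vs: "length vs = T" "distinct vs" "set vs \<subseteq> {..<n}"
    and X: "X \<subseteq> {..<n} - set vs" "2 \<le> card X" and hom: "homogeneous f k vs X"
    by auto
  then obtain v where "v \<in> X" by fastforce
  have "homogeneous f k (vs @ [v]) {}" using hom \<open>v \<in> X\<close> by (rule homogeneous_snoc) auto
  then show thesis using that[of "vs @ [v]"] vs X(1) \<open>v \<in> X\<close> by auto
qed

lemma homogeneous_fork_configuration:
  assumes lc: "local_coloring n 3 H k f" and k: "k \<ge> 1"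
    and n: "2 * (2 * k ^ ((2 * k ^ 2 + 4) ^ 3)) ^ (2 * k ^ 2 + 3) \<le> n"
  obtains a d r1 r2 r3 r4 where "distinct [a, r1, r2, d, r3, r4]" "set [a, r1, r2, d, r3, r4] \<subseteq> {..<n}"
    "\<forall>u\<in>{a, d}. f u {d, r1, r2} = f u {d, r3, r4}"
    "\<forall>u\<in>{r1, r2, r3, r4}. f u {r1, r2, d} = f u {r1, r2, a}"
proof -
  define D where "D = 2 * k ^ 2 + 2"
  have "Suc (2 * k ^ 2 + 3) = 2 * k ^ 2 + 4" by simp
  with n have "2 * (2 * k ^ (Suc (2 * k ^ 2 + 3) ^ 3)) ^ (2 * k ^ 2 + 3) \<le> n" by (simp only:)
  then obtain vs where "length vs = Suc (2 * k ^ 2 + 3)" "distinct vs" "set vs \<subseteq> {..<n}"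
    and hom: "homogeneous f k vs {}"
    by (rule homogeneous_sequence_exists[OF k])
  then have vs: "length vs = Suc (Suc D)" "distinct vs" "set vs \<subseteq> {..<n}" by (simp_all add: D_def)
  define a where "a = vs ! Suc D"
  define d where "d = vs ! D"
  let ?S = "set (take D vs)"
  have "length (drop D vs) = 2" using vs(1) by simp
  then have "drop D vs ! 0 \<in> set (drop D vs)" "drop D vs ! 1 \<in> set (drop D vs)"
    by (intro nth_mem; simp)+
  then have ad: "d \<in> set (drop D vs)" "a \<in> set (drop D vs)" using vs(1) by (simp_all add: a_def d_def)
  moreover have "?S \<inter> set (drop D vs) = {}" using vs(2) by (simp add: set_take_disj_set_drop_if_distinct)
  ultimately have "d \<notin> ?S" "a \<notin> ?S" by blast+
  have "a \<noteq> d" using vs(1,2) by (simp add: a_def d_def nth_eq_iff_index_eq)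
  have "a < n" "d < n" using ad vs(3) in_set_dropD by fastforce+
  have S: "?S \<subseteq> {..<n}" "2 * k ^ 2 + 2 \<le> card ?S"
    using vs set_take_subset by (fastforce simp: distinct_card D_def)+
  obtain r1 r2 r3 r4 where r: "distinct [r1, r2, r3, r4]" "{r1, r2, r3, r4} \<subseteq> ?S"
    and fork: "\<forall>u\<in>{a, d}. f u {d, r1, r2} = f u {d, r3, r4}"
    by (rule pair_collision[OF lc \<open>a < n\<close> \<open>d < n\<close> \<open>d < n\<close> \<open>d \<notin> ?S\<close> S])
  have colour_lt: "f u {r1, r2, z} < k" if "u \<in> ?S" "z \<in> {a, d}" for u z
  proof (rule local_coloring_colour_lt[OF lc])
    show "u < n" using that(1) S(1) by blast
    have "z \<notin> {r1, r2}" using r(2) that(2) \<open>d \<notin> ?S\<close> \<open>a \<notin> ?S\<close> by auto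
    then show "{r1, r2, z} \<subseteq> {..<n}" "card {r1, r2, z} = 3"
      using r S(1) that(2) \<open>a < n\<close> \<open>d < n\<close> by auto
  qed
  \<comment> \<open>the vertices of \<open>?S\<close> come before \<open>d\<close> and \<open>a\<close> in the homogeneous sequence\<close>
  have hom_eq: "f u {r1, r2, d} = f u {r1, r2, a}" if "u \<in> ?S" for u
  proof (rule homogeneous_colour_eq[OF hom, of "D - 1"])
    have "Suc (D - 1) = D" by (simp add: D_def)
    then show "u \<in> set (take (Suc (D - 1)) vs)" "r1 \<in> set (take (Suc (D - 1)) vs)"
      "r2 \<in> set (take (Suc (D - 1)) vs)" "d \<in> set (drop (Suc (D - 1)) vs) \<union> {}"
      "a \<in> set (drop (Suc (D - 1)) vs) \<union> {}"
      using that r(2) ad by auto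
  qed (use vs(1) colour_lt that in auto)
  have "distinct [a, r1, r2, d, r3, r4]" using r \<open>d \<notin> ?S\<close> \<open>a \<notin> ?S\<close> \<open>a \<noteq> d\<close> by auto
  moreover have "set [a, r1, r2, d, r3, r4] \<subseteq> {..<n}" using r S(1) \<open>a < n\<close> \<open>d < n\<close> by auto
  ultimately show thesis using that fork hom_eq r(2) by blast
qed

lemma SP3_bound:
  assumes lc: "local_coloring n 3 SP3 k f" and k: "k \<ge> 1"
  shows "n < 2 * (2 * k ^ ((2 * k ^ 2 + 4) ^ 3)) ^ (2 * k ^ 2 + 3)"
proof (rule ccontr)
  assume "\<not> ?thesis"
  then obtain a d r1 r2 r3 r4 where L: "distinct [a, r1, r2, d, r3, r4]" "set [a, r1, r2, d, r3, r4] \<subseteq> {..<n}"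
    and fork: "\<forall>u\<in>{a, d}. f u {d, r1, r2} = f u {d, r3, r4}"
    and hom_eq: "\<forall>u\<in>{r1, r2, r3, r4}. f u {r1, r2, d} = f u {r1, r2, a}"
    using homogeneous_fork_configuration[OF lc k] by (metis not_less)
  let ?L = "[a, r1, r2, d, r3, r4]"
  have "\<Union>SP3 \<subseteq> {0..<0 + length ?L}" by (auto simp: SP3_def)
  with L obtain v where v: "v \<in> \<Union>SP3" and rainbow:
    "\<And>e e'. e \<in> SP3 \<Longrightarrow> e' \<in> SP3 \<Longrightarrow>
       f (?L ! (v - 0)) ((\<lambda>q. ?L ! (q - 0)) ` e) = f (?L ! (v - 0)) ((\<lambda>q. ?L ! (q - 0)) ` e')
       \<Longrightarrow> e = e'"
    using local_coloring_list_copy[OF lc] by blast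
  have img: "(\<lambda>q. ?L ! q) ` {0,1,2} = {a, r1, r2}" "(\<lambda>q. ?L ! q) ` {1,2,3} = {r1, r2, d}"
    "(\<lambda>q. ?L ! q) ` {3,4,5} = {d, r3, r4}"
    by simp_all
  from v consider "v \<in> {0, 3}" | "v \<in> {1, 2, 4, 5}" by (auto simp: SP3_def)
  then show False
  proof cases
    case 1
    then have "f (?L ! v) {r1, r2, d} = f (?L ! v) {d, r3, r4}"
      using fork by (auto simp: insert_commute)
    then show False using rainbow[of "{1,2,3}" "{3,4,5}"] by (simp add: SP3_def img) (simp add: set_eq_subset)
  next
    case 2
    then have "f (?L ! v) {a, r1, r2} = f (?L ! v) {r1, r2, d}"
      using hom_eq by (auto simp: insert_commute)
    then show False using rainbow[of "{0,1,2}" "{1,2,3}"] by (simp add: SP3_def img) (simp add: set_eq_subset)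
  qed
qed

section \<open>Asymptotics\<close>

lemma SP3_bound_le:
  assumes k: "k \<ge> (1::nat)"
  shows "2 * (2 * k ^ ((2 * k ^ 2 + 4) ^ 3)) ^ (2 * k ^ 2 + 3) \<le> (2 * k) ^ (1296 * k ^ 8)"
proof -
  define m where "m = 2 * k ^ 2 + 4"
  define K where "K = k ^ (m ^ 3)"
  have K: "K \<ge> 1" using k by (simp add: K_def)
  have "2 * (2 * K) ^ (2 * k ^ 2 + 3) \<le> (2 * K) * (2 * K) ^ (2 * k ^ 2 + 3)" using K by simp
  also have "\<dots> = (2 * K) ^ m"
  proof -
    have "m = Suc (2 * k ^ 2 + 3)" by (simp add: m_def)
    then show ?thesis by (simp only: power_Suc)
  qed
  also have "\<dots> \<le> ((2 * k) ^ (m ^ 3)) ^ m"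
  proof (rule power_mono)
    have "(2::nat) ^ 1 \<le> 2 ^ (m ^ 3)" by (intro power_increasing) (auto simp: m_def)
    then show "2 * K \<le> (2 * k) ^ (m ^ 3)" by (simp add: K_def power_mult_distrib)
  qed simp
  also have "\<dots> = (2 * k) ^ (m ^ 4)"
  proof -
    have "m ^ 3 * m = m ^ 4" by (simp add: power3_eq_cube power4_eq_xxxx)
    then show ?thesis by (simp only: power_mult[symmetric])
  qed
  also have "\<dots> \<le> (2 * k) ^ (1296 * k ^ 8)"
  proof (rule power_increasing)
    have "m \<le> 6 * k ^ 2" using k by (simp add: m_def power2_eq_square)
    then have "m ^ 4 \<le> (6 * k ^ 2) ^ 4" by (rule power_mono) simp
    then show "m ^ 4 \<le> 1296 * k ^ 8" by (simp add: power_mult_distrib power_mult[symmetric])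
  qed (use k in simp)
  finally show ?thesis by (simp add: K_def m_def)
qed

lemma power_powr_inverse:
  fixes y :: real
  assumes "y \<ge> 0" and "e > 0"
  shows "(y ^ e) powr (1 / real e) = y"
  using assms by (simp add: powr_realpow'[symmetric] powr_powr)

lemma bigomega_root_of_power_bound:
  fixes g :: "nat \<Rightarrow> nat"
  assumes A: "A \<ge> 1" and e: "e > 0"
    and bnd: "\<And>n. n \<ge> N0 \<Longrightarrow> real n \<le> (A * real (g n)) ^ e"
  shows "(\<lambda>n. real (g n)) \<in> \<Omega>(\<lambda>n. real n powr (1 / real e))"
proof -
  have "eventually (\<lambda>n. norm (real (g n)) \<ge> (1/A) * norm (real n powr (1 / real e))) at_top"
  proof (rule eventually_at_top_linorderI[of N0])
    fix n assume n: "n \<ge> N0"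
    have "real n powr (1 / real e) \<le> ((A * real (g n)) ^ e) powr (1 / real e)"
      using bnd[OF n] by (intro powr_mono2) auto
    also have "\<dots> = A * real (g n)"
      using A e by (intro power_powr_inverse) auto
    finally show "norm (real (g n)) \<ge> (1/A) * norm (real n powr (1 / real e))"
      using A by (simp add: field_simps)
  qed
  moreover have "(1/A) > 0" using A by simp
  ultimately show ?thesis unfolding bigomega_def by blast
qed

lemma ln_div_ln_ln_le:
  fixes L k :: real
  assumes k: "k \<ge> 1" and L: "L \<ge> 3" and bound: "L < 1296 * k ^ 8 * ln (2 * k)"
  shows "L / ln L \<le> (3 * k) ^ 8"
proof -
  have ln_L: "ln L \<ge> 1" using L exp_le by (subst ln_ge_iff) auto
  show ?thesis
  proof (cases "2 * k \<le> L")
    case True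
    then have "ln (2 * k) \<le> ln L" using k by simp
    then have "L < 1296 * k ^ 8 * ln L" using bound by (smt (verit) mult_left_mono zero_le_power k)
    then have "L / ln L < 1296 * k ^ 8" using ln_L by (simp add: divide_less_eq)
    also have "\<dots> \<le> (3 * k) ^ 8" using k by (simp add: power_mult_distrib)
    finally show ?thesis by simp
  next
    case False
    have "L / ln L \<le> L" using ln_L L by (simp add: divide_le_eq mult_le_cancel_left1)
    also have "\<dots> \<le> 3 * k" using False k by simp
    also have "\<dots> \<le> (3 * k) ^ 8" using k by (intro self_le_power) auto
    finally show ?thesis .
  qed
qed

lemma bigomega_root_loglog_of_bound:
  fixes g :: "nat \<Rightarrow> nat"
  assumes bound: "\<And>n. n \<ge> N0 \<Longrightarrow> g n \<ge> 1 \<and> real n < (2 * real (g n)) ^ (1296 * g n ^ 8)"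
  shows "(\<lambda>n. real (g n)) \<in> \<Omega>(\<lambda>n. (ln (real n) / ln (ln (real n))) powr (1/8))"
proof -
  have "eventually (\<lambda>n. norm (real (g n)) \<ge> (1/3) * norm ((ln (real n) / ln (ln (real n))) powr (1/8))) at_top"
  proof (rule eventually_at_top_linorderI[of "max N0 100"])
    fix n assume n: "n \<ge> max N0 100"
    define k where "k = real (g n)"
    define L where "L = ln (real n)"
    have k: "k \<ge> 1" and "real n < (2 * k) ^ (1296 * g n ^ 8)" using bound n by (auto simp: k_def)
    then have "L < ln ((2 * k) ^ (1296 * g n ^ 8))" using n by (simp add: L_def)
    also have "\<dots> = real (1296 * g n ^ 8) * ln (2 * k)" using k by (intro ln_realpow)
    also have "\<dots> = 1296 * k ^ 8 * ln (2 * k)" by (simp add: k_def)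
    finally have bound_L: "L < 1296 * k ^ 8 * ln (2 * k)" .
    have "exp (3::real) \<le> 100"
    proof -
      have "exp (3::real) = exp 1 ^ 3" using exp_of_nat_mult[of 3 "1::real"] by simp
      also have "\<dots> \<le> 3 ^ 3" using exp_le by (intro power_mono) auto
      finally show ?thesis by simp
    qed
    then have L: "L \<ge> 3" using n by (simp add: L_def ln_ge_iff)
    have "L / ln L \<le> (3 * k) ^ 8" by (rule ln_div_ln_ln_le[OF k L bound_L])
    then have "(L / ln L) powr (1/8) \<le> ((3 * k) ^ 8) powr (1/8)"
      using L by (intro powr_mono2) (auto intro: divide_nonneg_nonneg)
    also have "\<dots> = 3 * k" using power_powr_inverse[of "3 * k" 8] k by simp
    finally show "norm (real (g n)) \<ge> (1/3) * norm ((ln (real n) / ln (ln (real n))) powr (1/8))"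
      by (simp add: L_def k_def)
  qed
  then show ?thesis unfolding bigomega_def by (intro CollectI exI[of _ "1/3"]) auto
qed

lemma C_bigomega_root:
  assumes H: "\<Union>H \<noteq> {}" and A: "A \<ge> 1" and e: "e > 0"
    and bound: "\<And>n k f. n \<ge> 3 \<Longrightarrow> local_coloring n 3 H k f \<Longrightarrow> k \<ge> 1 \<Longrightarrow> real n < A * real k ^ e"
  shows "(\<lambda>n. real (C 3 n H)) \<in> \<Omega>(\<lambda>n. real n powr (1 / real e))"
proof (rule bigomega_root_of_power_bound[OF A e, of 3])
  fix n :: nat assume n: "n \<ge> 3"
  obtain f where lc: "local_coloring n 3 H (C 3 n H) f" using C_local_coloring[OF H] by blast
  have "C 3 n H \<ge> 1" using local_coloring_colours_pos[OF lc] n by simp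
  with bound[OF n lc] have "real n < A * real (C 3 n H) ^ e" .
  also have "\<dots> \<le> A ^ e * real (C 3 n H) ^ e"
    using A e by (intro mult_right_mono) (auto intro: order_trans[OF _ power_increasing[of 1 e A]])
  finally show "real n \<le> (A * real (C 3 n H)) ^ e" by (simp add: power_mult_distrib)
qed

lemma C_SP3_bound:
  assumes n: "n \<ge> 3"
  shows "C 3 n SP3 \<ge> 1 \<and> real n < (2 * real (C 3 n SP3)) ^ (1296 * C 3 n SP3 ^ 8)"
proof -
  obtain f where lc: "local_coloring n 3 SP3 (C 3 n SP3) f"
    using C_local_coloring[of SP3] by (auto simp: SP3_def)
  then have k: "C 3 n SP3 \<ge> 1" using local_coloring_colours_pos n by simp
  have "n < (2 * C 3 n SP3) ^ (1296 * C 3 n SP3 ^ 8)"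
    using SP3_bound[OF lc k] SP3_bound_le[OF k] by linarith
  then show ?thesis using k by (metis of_nat_less_iff of_nat_mult of_nat_numeral of_nat_power)
qed

theorem theorem2:
  shows "(\<lambda>n. real (C 3 n SP3)) \<in> \<Omega>(\<lambda>n. (ln (real n) / ln (ln (real n))) powr (1/8))
    \<and> (\<lambda>n. real (C 3 n (SP1 4))) \<in> \<Omega>(\<lambda>n. real n powr (1/8))
    \<and> (\<lambda>n. real (C 3 n (SP2 4))) \<in> \<Omega>(\<lambda>n. real n powr (1/7))
    \<and> (\<forall>t\<ge>5. (\<lambda>n. real (C 3 n (SP1 t))) \<in> \<Omega>(\<lambda>n. real n powr (1/3))
              \<and> (\<lambda>n. real (C 3 n (SP2 t))) \<in> \<Omega>(\<lambda>n. real n powr (1/3)))"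
proof (intro conjI allI impI)
  show "(\<lambda>n. real (C 3 n SP3)) \<in> \<Omega>(\<lambda>n. (ln (real n) / ln (ln (real n))) powr (1/8))"
    by (rule bigomega_root_loglog_of_bound[OF C_SP3_bound])
  show "(\<lambda>n. real (C 3 n (SP1 4))) \<in> \<Omega>(\<lambda>n. real n powr (1/8))"
    using C_bigomega_root[of "SP1 4" 30 8] SP1_4_bound by (simp add: SP1_4)
  show "(\<lambda>n. real (C 3 n (SP2 4))) \<in> \<Omega>(\<lambda>n. real n powr (1/7))"
    using C_bigomega_root[of "SP2 4" 20 7] SP2_4_bound by (simp add: SP2_4)
  fix t :: nat assume t: "t \<ge> 5"
  have "real n < real (4 * t + 12) * real k ^ 3" if "local_coloring n 3 H k f" "k \<ge> 1"
    and "H = SP1 t \<or> H = SP2 t" for n k f H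
    using SP1_bound[OF t] SP2_bound[OF t] that by (metis of_nat_less_iff of_nat_mult of_nat_power)
  moreover have "\<Union>(SP1 t) \<noteq> {}" "\<Union>(SP2 t) \<noteq> {}" using SP1_edges[OF t] SP2_edges[OF t] by blast+
  ultimately show "(\<lambda>n. real (C 3 n (SP1 t))) \<in> \<Omega>(\<lambda>n. real n powr (1/3))"
    and "(\<lambda>n. real (C 3 n (SP2 t))) \<in> \<Omega>(\<lambda>n. real n powr (1/3))"
    using C_bigomega_root[of "SP1 t" "real (4 * t + 12)" 3] C_bigomega_root[of "SP2 t" "real (4 * t + 12)" 3]
    by simp_all
qed

end
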